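(* (1) If $L_1,L_2\in\mathbb{L}^{>0}(\mathrm{QBA}|\mathrm{ND})$ (over the same alphabet $\Sigma$), then $L_1\cup L_2\in\mathbb{L}^{>0}(\mathrm{QBA}|\mathrm{ND})$. (2) Let $\lambda\in(0,1)$. If $L_1,L_2\in\mathbb{L}^{>\lambda}(\mathrm{QBA}|\mathrm{ND})$ (over the same alphabet), then there is a sequence of $\omega$-languages $L^{(k)}\in\mathbb{L}^{>\lambda}(\mathrm{QBA}|\mathrm{ND})$, $k\in\mathbb{N}$, with $\lim_{k\to\infty}L^{(k)}=L_1\cup L_2$. (3) For $\lambda\in(0,1)$, $\mathbb{L}^{>\lambda}(\mathrm{QBA}|\mathrm{ND})$ is not closed in the limit: there is a sequence of languages in $\mathbb{L}^{>\lambda}(\mathrm{QBA}|\mathrm{ND})$ whose limit exists and does not belong to $\mathbb{L}^{>\lambda}(\mathrm{QBA}|\mathrm{ND})$. (4) For $\lambda\in[0,1)$, $\mathbb{L}^{>\lambda}(\mathrm{QBA}|\mathrm{ND})$ is not closed under complementation (relative to $\Sigma^\omega$). (5) For $\lambda\in[0,1)$, $\mathbb{L}^{>\lambda}(\mathrm{QBA}|\mathrm{ND})$ is not closed under intersection.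
   Context: A quantum automaton is a tuple $\mathcal{A}=(\mathcal{H},|s_0\rangle,\Sigma,\{U_\sigma:\sigma\in\Sigma\},F)$ where $\mathcal{H}$ is a finite-dimensional complex Hilbert space, $|s_0\rangle$ a unit vector, $\Sigma$ a finite alphabet, each $U_\sigma$ unitary, and $F$ a subspace. For $w=\sigma_1\sigma_2\cdots\in\Sigma^\omega$ the non-disturbing run is $|s_n\rangle=U_{\sigma_n}\cdots U_{\sigma_1}|s_0\rangle$, and $f^{\mathrm{ND}}_{\mathcal{A}}(w)=\sup_{|\psi\rangle}\sup_{\{n_i\}}\inf_{i\ge1}|\langle\psi|s_{n_i}\rangle|^2$ (sup over unit $|\psi\rangle\in F$ and strictly increasing sequences $0\le n_1<n_2<\cdots$). For $\lambda\in[0,1)$, $\mathcal{L}^{>\lambda}(\mathcal{A}|\mathrm{ND})=\{w\in\Sigma^\omega:f^{\mathrm{ND}}_{\mathcal{A}}(w)>\lambda\}$ and $\mathbb{L}^{>\lambda}(\mathrm{QBA}|\mathrm{ND})$ is the class of all such languages as $\mathcal{A}$ ranges over quantum automata. The limit of a sequence of sets $L^{(k)}$ is understood in the set-theoretic sense: $\lim_k L^{(k)}=L$ means $\liminf_k L^{(k)}=\limsup_k L^{(k)}=L$. *)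

theory Defs
  imports Complex_Main "Jordan_Normal_Form.Matrix"
begin

definition cinner :: "complex vec \<Rightarrow> complex vec \<Rightarrow> complex" where
  "cinner \<psi> s = (\<Sum>i<dim_vec s. cnj (\<psi> $ i) * s $ i)"

definition unit_vec_n :: "nat \<Rightarrow> complex vec \<Rightarrow> bool" where
  "unit_vec_n n v \<longleftrightarrow> v \<in> carrier_vec n \<and> cinner v v = 1"

definition adjoint_mat :: "complex mat \<Rightarrow> complex mat" where
  "adjoint_mat U = mat (dim_col U) (dim_row U) (\<lambda>(i,j). cnj (U $$ (j,i)))"

definition unitary_n :: "nat \<Rightarrow> complex mat \<Rightarrow> bool" where
  "unitary_n n U \<longleftrightarrow> U \<in> carrier_mat n n \<and> adjoint_mat U * U = 1\<^sub>m n"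

definition subspace_n :: "nat \<Rightarrow> complex vec set \<Rightarrow> bool" where
  "subspace_n n F \<longleftrightarrow> F \<subseteq> carrier_vec n \<and> 0\<^sub>v n \<in> F \<and>
     (\<forall>u\<in>F. \<forall>v\<in>F. u + v \<in> F) \<and> (\<forall>c::complex. \<forall>v\<in>F. c \<cdot>\<^sub>v v \<in> F)"

definition is_QA :: "'a set \<Rightarrow> nat \<Rightarrow> complex vec \<Rightarrow> ('a \<Rightarrow> complex mat) \<Rightarrow> complex vec set \<Rightarrow> bool" where
  "is_QA \<Sigma> n s0 U F \<longleftrightarrow> finite \<Sigma> \<and> unit_vec_n n s0 \<and> (\<forall>\<sigma>\<in>\<Sigma>. unitary_n n (U \<sigma>)) \<and> subspace_n n F"

text \<open>omega-words over Sigma: w 0 = sigma_1, w 1 = sigma_2, ...\<close>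
definition omega_words :: "'a set \<Rightarrow> (nat \<Rightarrow> 'a) set" where
  "omega_words \<Sigma> = {w. \<forall>i. w i \<in> \<Sigma>}"

primrec nd_run :: "complex vec \<Rightarrow> ('a \<Rightarrow> complex mat) \<Rightarrow> (nat \<Rightarrow> 'a) \<Rightarrow> nat \<Rightarrow> complex vec" where
  "nd_run s0 U w 0 = s0"
| "nd_run s0 U w (Suc k) = U (w k) *\<^sub>v nd_run s0 U w k"

text \<open>f^ND(w) = sup over unit psi in F and strictly increasing (n_i) of inf_i |<psi|s_{n_i}>|^2
  (sup of the empty set, i.e. F = {0}, taken to be 0).\<close>
definition f_ND :: "nat \<Rightarrow> complex vec \<Rightarrow> ('a \<Rightarrow> complex mat) \<Rightarrow> complex vec set \<Rightarrow> (nat \<Rightarrow> 'a) \<Rightarrow> real" where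
  "f_ND n s0 U F w =
     (let S = {(INF i. (cmod (cinner \<psi> (nd_run s0 U w (ns i))))\<^sup>2) | \<psi> (ns :: nat \<Rightarrow> nat).
                 \<psi> \<in> F \<and> unit_vec_n n \<psi> \<and> strict_mono ns}
      in if S = {} then 0 else Sup S)"

definition QBA_lang :: "'a set \<Rightarrow> nat \<Rightarrow> complex vec \<Rightarrow> ('a \<Rightarrow> complex mat) \<Rightarrow> complex vec set \<Rightarrow> real \<Rightarrow> (nat \<Rightarrow> 'a) set" where
  "QBA_lang \<Sigma> n s0 U F lam = {w \<in> omega_words \<Sigma>. f_ND n s0 U F w > lam}"

definition QBA_class :: "'a set \<Rightarrow> real \<Rightarrow> (nat \<Rightarrow> 'a) set set" where
  "QBA_class \<Sigma> lam = {L. \<exists>n s0 U F. is_QA \<Sigma> n s0 U F \<and> L = QBA_lang \<Sigma> n s0 U F lam}"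

definition set_liminf :: "(nat \<Rightarrow> 'b set) \<Rightarrow> 'b set" where
  "set_liminf L = (\<Union>k. \<Inter>j\<in>{k..}. L j)"

definition set_limsup :: "(nat \<Rightarrow> 'b set) \<Rightarrow> 'b set" where
  "set_limsup L = (\<Inter>k. \<Union>j\<in>{k..}. L j)"

definition set_lim_is :: "(nat \<Rightarrow> 'b set) \<Rightarrow> 'b set \<Rightarrow> bool" where
  "set_lim_is L X \<longleftrightarrow> set_liminf L = X \<and> set_limsup L = X"

end

theory Submission
  imports Defs "HOL-Analysis.L2_Norm" "HOL-Library.Infinite_Set"
begin

text \<open>Fix an orthonormal basis \<open>b\<^sub>1, \<dots>, b\<^sub>m\<close> of \<open>F\<close> and call \<open>\<Sum>\<^sub>j |\<langle>b\<^sub>j|s\<^sub>k\<rangle>|\<^sup>2\<close>, the squared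
  norm of the projection of \<open>s\<^sub>k\<close> onto \<open>F\<close>, the weight of step \<open>k\<close>. Then \<open>f\<^sup>N\<^sup>D(w) > \<lambda>\<close> holds exactly
  when the weights exceed \<open>\<lambda> + \<epsilon>\<close> infinitely often for some \<open>\<epsilon> > 0\<close>: Cauchy--Schwarz gives one
  direction, and Bolzano--Weierstrass applied to the coordinates \<open>\<langle>b\<^sub>j|s\<^sub>k\<rangle>\<close> produces the vector
  \<open>\<psi>\<close> for the other.

  Direct sums and tensor products of automata realise convex combinations and products of weight
  sequences. For \<open>\<lambda> = 0\<close> the average of two automata accepts the union. For \<open>\<lambda> > 0\<close> the weights
  \<open>\<lambda> + (1 - \<lambda>)((a\<^sub>k\<^sup>K + b\<^sub>k\<^sup>K)/2 - \<lambda>\<^sup>K)\<close> are frequently above \<open>\<lambda>\<close> exactly when \<open>a\<close> or \<open>b\<close> is, once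
  \<open>K\<close> is large, so these automata converge to the union.

  The negative statements rest on recurrence: the orbit of a unitary returns arbitrarily close to
  its start infinitely often, so an accepted word remains accepted when it is cut at a suitable
  point and continued by a constant letter. Permutation automata counting a letter modulo \<open>N\<close>
  provide languages whose complement, intersection or limit violates this property.\<close>

section \<open>The Hilbert space of complex vectors\<close>

definition vnorm :: "complex vec \<Rightarrow> real" where
  "vnorm v = L2_set (\<lambda>i. cmod (v $ i)) {..<dim_vec v}"

lemma vnorm_nonneg: "0 \<le> vnorm v"
  unfolding vnorm_def by (rule L2_set_nonneg)

lemma vnorm_power2: "(vnorm v)\<^sup>2 = (\<Sum>i<dim_vec v. (cmod (v $ i))\<^sup>2)"
  unfolding vnorm_def L2_set_def by (simp add: sum_nonneg)

lemma complex_of_real_cmod_power2: "(complex_of_real (cmod z))\<^sup>2 = z * cnj z"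
  by (metis complex_norm_square of_real_power)

lemma cinner_self: "cinner v v = complex_of_real ((vnorm v)\<^sup>2)"
  unfolding vnorm_power2 cinner_def of_real_sum
  by (rule sum.cong) (simp_all add: complex_of_real_cmod_power2 mult.commute)

lemma unit_vec_n_iff: "unit_vec_n n \<psi> \<longleftrightarrow> \<psi> \<in> carrier_vec n \<and> vnorm \<psi> = 1"
proof -
  have "cinner \<psi> \<psi> = 1 \<longleftrightarrow> (vnorm \<psi>)\<^sup>2 = 1"
    unfolding cinner_self by (metis of_real_1 of_real_eq_iff)
  also have "\<dots> \<longleftrightarrow> vnorm \<psi> = 1"
    using vnorm_nonneg[of \<psi>] by (simp add: power2_eq_1_iff)
  finally show ?thesis unfolding unit_vec_n_def by simp
qed

lemma norm_cinner_le:
  assumes "dim_vec u = dim_vec v"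
  shows "cmod (cinner u v) \<le> vnorm u * vnorm v"
proof -
  have "cmod (cinner u v) \<le> (\<Sum>i<dim_vec v. cmod (cnj (u $ i) * v $ i))"
    unfolding cinner_def by (rule norm_sum)
  also have "\<dots> = (\<Sum>i<dim_vec v. \<bar>cmod (u $ i)\<bar> * \<bar>cmod (v $ i)\<bar>)"
    by (simp add: norm_mult)
  also have "\<dots> \<le> L2_set (\<lambda>i. cmod (u $ i)) {..<dim_vec v} * L2_set (\<lambda>i. cmod (v $ i)) {..<dim_vec v}"
    by (rule L2_set_mult_ineq)
  finally show ?thesis unfolding vnorm_def assms .
qed

lemma norm_cinner_le_1:
  assumes "u \<in> carrier_vec n" "v \<in> carrier_vec n" "vnorm u \<le> 1" "vnorm v \<le> 1"
  shows "cmod (cinner u v) \<le> 1"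
proof -
  have "cmod (cinner u v) \<le> vnorm u * vnorm v" using assms(1,2) by (intro norm_cinner_le) (metis carrier_vecD)
  also have "\<dots> \<le> 1" using assms(3,4) vnorm_nonneg by (intro mult_le_one) auto
  finally show ?thesis .
qed

lemma cinner_swap: "dim_vec u = dim_vec v \<Longrightarrow> cinner v u = cnj (cinner u v)"
  unfolding cinner_def by (simp add: mult.commute)

lemma cinner_add_right: "dim_vec v = dim_vec w \<Longrightarrow> cinner u (v + w) = cinner u v + cinner u w"
  unfolding cinner_def by (simp add: sum.distrib algebra_simps)

lemma cinner_minus_right: "dim_vec v = dim_vec w \<Longrightarrow> cinner u (v - w) = cinner u v - cinner u w"
  unfolding cinner_def by (simp add: sum_subtractf algebra_simps)

lemma cinner_minus_left:
  "dim_vec u = dim_vec w \<Longrightarrow> dim_vec v = dim_vec w \<Longrightarrow> cinner (u - v) w = cinner u w - cinner v w"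
  unfolding cinner_def by (simp add: sum_subtractf algebra_simps)

lemma cinner_smult_right: "cinner u (c \<cdot>\<^sub>v v) = c * cinner u v"
  unfolding cinner_def by (simp add: sum_distrib_left algebra_simps)

lemma cinner_smult_left: "dim_vec u = dim_vec v \<Longrightarrow> cinner (c \<cdot>\<^sub>v u) v = cnj c * cinner u v"
  unfolding cinner_def by (simp add: sum_distrib_left algebra_simps)

lemma cinner_zero_left: "dim_vec v = n \<Longrightarrow> cinner (0\<^sub>v n) v = 0"
  unfolding cinner_def by simp

lemma cinner_zero_right: "cinner u (0\<^sub>v n) = 0"
  unfolding cinner_def by simp

lemma cinner_unit_vec:
  assumes "i < n" "j < n"
  shows "cinner (unit_vec n i) (unit_vec n j) = (if i = j then 1 else 0)"
proof -
  have "cinner (unit_vec n i) (unit_vec n j) = (\<Sum>k<n. if k = i then (if i = j then 1 else 0) else 0)"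
    unfolding cinner_def by (rule sum.cong) (auto simp: unit_vec_def)
  then show ?thesis using assms by (simp add: sum.delta)
qed

lemma vnorm_zero_iff: "vnorm v = 0 \<longleftrightarrow> v = 0\<^sub>v (dim_vec v)"
proof
  assume "vnorm v = 0"
  then have "\<forall>i<dim_vec v. cmod (v $ i) = 0"
    unfolding vnorm_def by (subst (asm) L2_set_eq_0_iff) auto
  then show "v = 0\<^sub>v (dim_vec v)" by (intro eq_vecI) auto
next
  assume "v = 0\<^sub>v (dim_vec v)"
  then show "vnorm v = 0" unfolding vnorm_def
    by (metis (no_types, lifting) L2_set_0' index_zero_vec(1) lessThan_iff norm_zero)
qed

lemma norm_index_le_vnorm: "i < dim_vec v \<Longrightarrow> cmod (v $ i) \<le> vnorm v"
  unfolding vnorm_def by (rule member_le_L2_set) auto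

lemma vnorm_triangle:
  assumes "dim_vec u = dim_vec v" "dim_vec w = dim_vec v"
  shows "vnorm (u - w) \<le> vnorm (u - v) + vnorm (v - w)"
proof -
  have "vnorm (u - w) = L2_set (\<lambda>i. cmod (u $ i - w $ i)) {..<dim_vec v}"
    unfolding vnorm_def using assms by (intro L2_set_cong) auto
  also have "\<dots> \<le> L2_set (\<lambda>i. cmod (u $ i - v $ i) + cmod (v $ i - w $ i)) {..<dim_vec v}"
    by (rule L2_set_mono) (auto intro: norm_diff_triangle_le)
  also have "\<dots> \<le> L2_set (\<lambda>i. cmod (u $ i - v $ i)) {..<dim_vec v}
                   + L2_set (\<lambda>i. cmod (v $ i - w $ i)) {..<dim_vec v}"
    by (rule L2_set_triangle_ineq)
  also have "\<dots> = vnorm (u - v) + vnorm (v - w)"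
    unfolding vnorm_def using assms by (intro arg_cong2[where f="(+)"] L2_set_cong) auto
  finally show ?thesis .
qed

lemma vnorm_minus_commute: "dim_vec u = dim_vec v \<Longrightarrow> vnorm (u - v) = vnorm (v - u)"
  unfolding vnorm_def by (intro L2_set_cong) (auto simp: norm_minus_commute)

lemma vnorm_smult: "vnorm (c \<cdot>\<^sub>v v) = cmod c * vnorm v"
proof -
  have "L2_set (\<lambda>i. cmod ((c \<cdot>\<^sub>v v) $ i)) {..<dim_vec v} = L2_set (\<lambda>i. cmod c * cmod (v $ i)) {..<dim_vec v}"
    by (rule L2_set_cong) (auto simp: norm_mult)
  then show ?thesis by (simp add: vnorm_def L2_set_right_distrib)
qed

lemma unitary_n_iff_columns:
  "unitary_n n U \<longleftrightarrow> U \<in> carrier_mat n n \<and>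
     (\<forall>k<n. \<forall>l<n. (\<Sum>i<n. cnj (U $$ (i,k)) * U $$ (i,l)) = (if k = l then 1 else 0))"
proof (cases "U \<in> carrier_mat n n")
  case True
  have entry: "(adjoint_mat U * U) $$ (k,l) = (\<Sum>i<n. cnj (U $$ (i,k)) * U $$ (i,l))"
    if "k < n" "l < n" for k l
    using True that by (simp add: adjoint_mat_def scalar_prod_def atLeast0LessThan)
  have dims: "adjoint_mat U * U \<in> carrier_mat n n"
    using True unfolding adjoint_mat_def by (intro mult_carrier_mat[of _ n n]) auto
  have "adjoint_mat U * U = 1\<^sub>m n \<longleftrightarrow>
      (\<forall>k<n. \<forall>l<n. (adjoint_mat U * U) $$ (k,l) = 1\<^sub>m n $$ (k,l))"
    using dims by (metis carrier_matD index_one_mat(2,3) eq_matI)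
  then show ?thesis using True entry unfolding unitary_n_def by simp
qed (simp add: unitary_n_def)

lemma cinner_unitary:
  assumes U: "unitary_n n U" and v: "v \<in> carrier_vec n" and w: "w \<in> carrier_vec n"
  shows "cinner (U *\<^sub>v v) (U *\<^sub>v w) = cinner v w"
proof -
  have Uc: "U \<in> carrier_mat n n"
    and cols: "\<And>k l. k < n \<Longrightarrow> l < n \<Longrightarrow> (\<Sum>i<n. cnj (U $$ (i,k)) * U $$ (i,l)) = (if k = l then 1 else 0)"
    using U unfolding unitary_n_iff_columns by auto
  have "cinner (U *\<^sub>v v) (U *\<^sub>v w) =
      (\<Sum>i<n. cnj (\<Sum>k<n. U $$ (i,k) * v $ k) * (\<Sum>l<n. U $$ (i,l) * w $ l))"
    using Uc v w by (simp add: cinner_def scalar_prod_def atLeast0LessThan)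
  also have "\<dots> = (\<Sum>i<n. \<Sum>l<n. \<Sum>k<n. cnj (v $ k) * w $ l * (cnj (U $$ (i,k)) * U $$ (i,l)))"
    by (simp add: cnj_sum sum_product mult_ac)
  also have "\<dots> = (\<Sum>l<n. \<Sum>i<n. \<Sum>k<n. cnj (v $ k) * w $ l * (cnj (U $$ (i,k)) * U $$ (i,l)))"
    by (rule sum.swap)
  also have "\<dots> = (\<Sum>l<n. \<Sum>k<n. \<Sum>i<n. cnj (v $ k) * w $ l * (cnj (U $$ (i,k)) * U $$ (i,l)))"
    by (rule sum.cong[OF refl], rule sum.swap)
  also have "\<dots> = (\<Sum>l<n. \<Sum>k<n. cnj (v $ k) * w $ l * (if k = l then 1 else 0))"
    by (simp add: sum_distrib_left[symmetric] cols)
  also have "\<dots> = (\<Sum>l<n. cnj (v $ l) * w $ l)"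
    by (simp add: if_distrib sum.delta cong: if_cong)
  also have "\<dots> = cinner v w" using w by (simp add: cinner_def)
  finally show ?thesis .
qed

lemma vnorm_unitary:
  assumes "unitary_n n U" "v \<in> carrier_vec n"
  shows "vnorm (U *\<^sub>v v) = vnorm v"
proof -
  have "(vnorm (U *\<^sub>v v))\<^sup>2 = (vnorm v)\<^sup>2"
    using cinner_unitary[OF assms assms(2)] unfolding cinner_self of_real_eq_iff .
  then show ?thesis using vnorm_nonneg by (simp add: power2_eq_iff_nonneg)
qed

lemma nd_run_unit:
  assumes qa: "is_QA \<Sigma> n s0 U F" and w: "w \<in> omega_words \<Sigma>"
  shows "nd_run s0 U w k \<in> carrier_vec n \<and> vnorm (nd_run s0 U w k) = 1"
proof (induction k)
  case 0
  then show ?case using qa unfolding is_QA_def unit_vec_n_iff by simp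
next
  case (Suc k)
  have "unitary_n n (U (w k))" using qa w unfolding is_QA_def omega_words_def by auto
  then show ?case using Suc by (auto simp: vnorm_unitary unitary_n_def)
qed

lemmas nd_run_carrier = nd_run_unit[THEN conjunct1]
lemmas vnorm_nd_run = nd_run_unit[THEN conjunct2]

section \<open>Orthonormal families and the subspaces they span\<close>

definition orthonormal :: "nat \<Rightarrow> (nat \<Rightarrow> complex vec) \<Rightarrow> nat \<Rightarrow> bool" where
  "orthonormal n b m \<longleftrightarrow> (\<forall>j<m. b j \<in> carrier_vec n) \<and>
     (\<forall>j<m. \<forall>k<m. cinner (b j) (b k) = (if j = k then 1 else 0))"

definition basis_comb :: "nat \<Rightarrow> (nat \<Rightarrow> complex vec) \<Rightarrow> nat \<Rightarrow> (nat \<Rightarrow> complex) \<Rightarrow> complex vec" where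
  "basis_comb n b m c = vec n (\<lambda>i. \<Sum>j<m. c j * b j $ i)"

definition basis_proj :: "nat \<Rightarrow> (nat \<Rightarrow> complex vec) \<Rightarrow> nat \<Rightarrow> complex vec \<Rightarrow> complex vec" where
  "basis_proj n b m v = basis_comb n b m (\<lambda>j. cinner (b j) v)"

text \<open>The span is encoded as the set of fixed points of the orthogonal projection.\<close>

definition basis_span :: "nat \<Rightarrow> (nat \<Rightarrow> complex vec) \<Rightarrow> nat \<Rightarrow> complex vec set" where
  "basis_span n b m = {v \<in> carrier_vec n. basis_proj n b m v = v}"

definition proj_norm2 :: "(nat \<Rightarrow> complex vec) \<Rightarrow> nat \<Rightarrow> complex vec \<Rightarrow> real" where
  "proj_norm2 b m v = (\<Sum>j<m. (cmod (cinner (b j) v))\<^sup>2)"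

lemma proj_norm2_nonneg: "0 \<le> proj_norm2 b m v"
  unfolding proj_norm2_def by (simp add: sum_nonneg)

lemma basis_comb_carrier [simp]: "basis_comb n b m c \<in> carrier_vec n"
  and dim_basis_comb [simp]: "dim_vec (basis_comb n b m c) = n"
  unfolding basis_comb_def by simp_all

lemma orthonormal_carrier: "orthonormal n b m \<Longrightarrow> j < m \<Longrightarrow> b j \<in> carrier_vec n"
  unfolding orthonormal_def by auto

lemma orthonormal_vnorm: "orthonormal n b m \<Longrightarrow> j < m \<Longrightarrow> vnorm (b j) = 1"
  unfolding orthonormal_def by (metis (full_types) carrier_vecD unit_vec_n_def unit_vec_n_iff)

lemma cinner_basis_comb_right:
  assumes "\<forall>j<m. b j \<in> carrier_vec n"
  shows "cinner u (basis_comb n b m c) = (\<Sum>j<m. c j * cinner u (b j))"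
proof -
  have "cinner u (basis_comb n b m c) = (\<Sum>i<n. \<Sum>j<m. cnj (u $ i) * (c j * b j $ i))"
    unfolding cinner_def basis_comb_def by (simp add: sum_distrib_left)
  also have "\<dots> = (\<Sum>j<m. \<Sum>i<n. cnj (u $ i) * (c j * b j $ i))" by (rule sum.swap)
  also have "\<dots> = (\<Sum>j<m. c j * cinner u (b j))"
    using assms unfolding cinner_def by (intro sum.cong refl) (auto simp: sum_distrib_left mult_ac)
  finally show ?thesis .
qed

lemma cinner_basis_comb_left:
  assumes "\<forall>j<m. b j \<in> carrier_vec n" "u \<in> carrier_vec n"
  shows "cinner (basis_comb n b m c) u = (\<Sum>j<m. cnj (c j) * cinner (b j) u)"
proof -
  have "cinner (basis_comb n b m c) u = (\<Sum>i<n. \<Sum>j<m. cnj (c j) * cnj (b j $ i) * u $ i)"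
    using assms unfolding cinner_def basis_comb_def by (simp add: sum_distrib_right)
  also have "\<dots> = (\<Sum>j<m. \<Sum>i<n. cnj (c j) * cnj (b j $ i) * u $ i)" by (rule sum.swap)
  also have "\<dots> = (\<Sum>j<m. cnj (c j) * cinner (b j) u)"
    using assms unfolding cinner_def by (intro sum.cong refl) (auto simp: sum_distrib_left mult_ac)
  finally show ?thesis .
qed

lemma cinner_basis_comb:
  assumes "orthonormal n b m" "j < m"
  shows "cinner (b j) (basis_comb n b m c) = c j"
proof -
  have "cinner (b j) (basis_comb n b m c) = (\<Sum>k<m. c k * (if j = k then 1 else 0))"
    using assms unfolding orthonormal_def by (subst cinner_basis_comb_right) auto
  also have "\<dots> = c j" using assms(2) by (simp add: if_distrib cong: if_cong)
  finally show ?thesis .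
qed

lemma vnorm_basis_comb_power2:
  assumes "orthonormal n b m"
  shows "(vnorm (basis_comb n b m c))\<^sup>2 = (\<Sum>j<m. (cmod (c j))\<^sup>2)"
proof -
  have "complex_of_real ((vnorm (basis_comb n b m c))\<^sup>2) = (\<Sum>j<m. cnj (c j) * c j)"
    unfolding cinner_self[symmetric] using assms
    by (subst cinner_basis_comb_left) (auto simp: orthonormal_def cinner_basis_comb)
  also have "\<dots> = complex_of_real (\<Sum>j<m. (cmod (c j))\<^sup>2)"
    by (simp add: complex_of_real_cmod_power2 mult.commute)
  finally show ?thesis using of_real_eq_iff by blast
qed

lemma basis_comb_cong:
  "(\<And>j. j < m \<Longrightarrow> c j = d j) \<Longrightarrow> basis_comb n b m c = basis_comb n b m d"
  unfolding basis_comb_def by (intro eq_vecI) auto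

lemma basis_span_subspace:
  assumes "orthonormal n b m"
  shows "subspace_n n (basis_span n b m)"
proof -
  have "basis_proj n b m (u + v) = basis_proj n b m u + basis_proj n b m v"
    if "u \<in> carrier_vec n" "v \<in> carrier_vec n" for u v
    using assms that unfolding basis_proj_def basis_comb_def orthonormal_def
    by (intro eq_vecI) (auto simp: cinner_add_right sum.distrib algebra_simps)
  moreover have "basis_proj n b m (c \<cdot>\<^sub>v v) = c \<cdot>\<^sub>v basis_proj n b m v" for c v
    unfolding basis_proj_def basis_comb_def
    by (intro eq_vecI) (auto simp: cinner_smult_right sum_distrib_left algebra_simps)
  moreover have "basis_proj n b m (0\<^sub>v n) = 0\<^sub>v n"
    unfolding basis_proj_def basis_comb_def cinner_def by (intro eq_vecI) auto
  ultimately show ?thesis unfolding subspace_n_def basis_span_def by auto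
qed

lemma basis_comb_in_span:
  assumes "orthonormal n b m"
  shows "basis_comb n b m c \<in> basis_span n b m"
proof -
  have "basis_proj n b m (basis_comb n b m c) = basis_comb n b m c"
    unfolding basis_proj_def using assms by (intro basis_comb_cong) (simp add: cinner_basis_comb)
  then show ?thesis unfolding basis_span_def by simp
qed

lemma basis_span_eq_comb:
  "v \<in> basis_span n b m \<Longrightarrow> v = basis_comb n b m (\<lambda>j. cinner (b j) v)"
  unfolding basis_span_def basis_proj_def by auto

lemma cinner_basis_residual:
  assumes b: "orthonormal n b m" and v: "v \<in> carrier_vec n" and j: "j < m"
  shows "cinner (b j) (v - basis_proj n b m v) = 0"
  using v b j unfolding basis_proj_def by (simp add: cinner_minus_right cinner_basis_comb)

lemma bessel_inequality:
  assumes b: "orthonormal n b m" and v: "v \<in> carrier_vec n"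
  shows "proj_norm2 b m v \<le> (vnorm v)\<^sup>2"
proof -
  define p where "p = basis_proj n b m v"
  have bc: "\<forall>j<m. b j \<in> carrier_vec n" using b unfolding orthonormal_def by auto
  have pc: "p \<in> carrier_vec n" unfolding p_def basis_proj_def by simp
  have Q: "complex_of_real (proj_norm2 b m v) = (\<Sum>j<m. cnj (cinner (b j) v) * cinner (b j) v)"
    unfolding proj_norm2_def by (simp add: complex_of_real_cmod_power2 mult.commute)
  have "cinner p (v - p) = (\<Sum>j<m. cnj (cinner (b j) v) * cinner (b j) (v - p))"
    using bc v pc unfolding p_def basis_proj_def by (intro cinner_basis_comb_left) auto
  also have "\<dots> = 0" using cinner_basis_residual[OF b v] unfolding p_def by simp
  finally have "cinner (v - p) (v - p) = cinner v (v - p)"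
    using pc v by (simp add: cinner_minus_left)
  also have "\<dots> = cinner v v - cinner v p" using pc v by (simp add: cinner_minus_right)
  also have "cinner v p = complex_of_real (proj_norm2 b m v)"
    unfolding Q p_def basis_proj_def using bc v
    by (subst cinner_basis_comb_right) (auto simp: mult.commute intro!: sum.cong cinner_swap)
  finally have "(vnorm (v - p))\<^sup>2 = (vnorm v)\<^sup>2 - proj_norm2 b m v"
    unfolding cinner_self by (metis of_real_diff of_real_eq_iff)
  then show ?thesis by (metis diff_ge_0_iff_ge zero_le_power2)
qed

lemma cinner_power2_le_proj_norm2:
  assumes b: "orthonormal n b m" and \<psi>: "\<psi> \<in> basis_span n b m" "vnorm \<psi> = 1"
    and v: "v \<in> carrier_vec n"
  shows "(cmod (cinner \<psi> v))\<^sup>2 \<le> proj_norm2 b m v"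
proof -
  define c where "c = (\<lambda>j. cinner (b j) \<psi>)"
  have \<psi>_eq: "\<psi> = basis_comb n b m c" unfolding c_def by (rule basis_span_eq_comb[OF \<psi>(1)])
  have "cinner \<psi> v = (\<Sum>j<m. cnj (c j) * cinner (b j) v)"
    using b v unfolding orthonormal_def by (subst \<psi>_eq, subst cinner_basis_comb_left) auto
  then have "cmod (cinner \<psi> v) \<le> (\<Sum>j<m. \<bar>cmod (c j)\<bar> * \<bar>cmod (cinner (b j) v)\<bar>)"
    by (auto intro: order_trans[OF norm_sum] simp: norm_mult)
  also have "\<dots> \<le> L2_set (\<lambda>j. cmod (c j)) {..<m} * L2_set (\<lambda>j. cmod (cinner (b j) v)) {..<m}"
    by (rule L2_set_mult_ineq)
  also have "L2_set (\<lambda>j. cmod (c j)) {..<m} = 1"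
    using vnorm_basis_comb_power2[OF b, of c] \<psi> \<psi>_eq unfolding L2_set_def by simp
  finally have "cmod (cinner \<psi> v) \<le> sqrt (proj_norm2 b m v)"
    unfolding L2_set_def proj_norm2_def by simp
  then show ?thesis
    using proj_norm2_nonneg by (metis norm_ge_zero power_mono real_sqrt_pow2)
qed

lemma orthonormal_length_le:
  assumes b: "orthonormal n b m"
  shows "m \<le> n"
proof -
  have "real m = (\<Sum>j<m. (vnorm (b j))\<^sup>2)"
    using orthonormal_vnorm[OF b] by simp
  also have "\<dots> = (\<Sum>j<m. \<Sum>i<n. (cmod (b j $ i))\<^sup>2)"
    by (intro sum.cong refl) (simp add: vnorm_power2 carrier_vecD[OF orthonormal_carrier[OF b]])
  also have "\<dots> = (\<Sum>i<n. \<Sum>j<m. (cmod (b j $ i))\<^sup>2)" by (rule sum.swap)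
  also have "\<dots> = (\<Sum>i<n. proj_norm2 b m (unit_vec n i))"
    unfolding proj_norm2_def cinner_def
    by (intro sum.cong refl) (simp add: unit_vec_def if_distrib sum.delta cong: if_cong)
  also have "\<dots> \<le> (\<Sum>i<n. (vnorm (unit_vec n i))\<^sup>2)"
    by (intro sum_mono bessel_inequality[OF b]) auto
  also have "\<dots> = real n"
  proof -
    have "(vnorm (unit_vec n i))\<^sup>2 = 1" if "i < n" for i
      using cinner_unit_vec[OF that that] unfolding cinner_self by (metis of_real_1 of_real_eq_iff)
    then show ?thesis by simp
  qed
  finally show ?thesis by simp
qed

lemma basis_comb_in_subspace:
  assumes F: "subspace_n n F" and bF: "\<forall>j<m. b j \<in> F"
  shows "basis_comb n b m c \<in> F"
  using bF
proof (induction m)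
  case 0
  have "basis_comb n b 0 c = 0\<^sub>v n" unfolding basis_comb_def by (intro eq_vecI) auto
  then show ?case using F unfolding subspace_n_def by auto
next
  case (Suc m)
  have "b m \<in> carrier_vec n" using Suc.prems F unfolding subspace_n_def by auto
  then have "basis_comb n b (Suc m) c = basis_comb n b m c + c m \<cdot>\<^sub>v b m"
    by (intro eq_vecI) (auto simp: basis_comb_def)
  moreover have "basis_comb n b m c \<in> F" "c m \<cdot>\<^sub>v b m \<in> F"
    using Suc F unfolding subspace_n_def by auto
  ultimately show ?case using F unfolding subspace_n_def by auto
qed

lemma orthonormal_extend:
  assumes b: "orthonormal n b m" and u: "unit_vec_n n u"
    and orth: "\<And>j. j < m \<Longrightarrow> cinner (b j) u = 0"
  shows "orthonormal n (b(m := u)) (Suc m)"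
  unfolding orthonormal_def
proof (intro conjI allI impI)
  have uc: "u \<in> carrier_vec n" "cinner u u = 1" using u unfolding unit_vec_n_def by auto
  fix j assume "j < Suc m"
  then show "(b(m := u)) j \<in> carrier_vec n"
    using orthonormal_carrier[OF b] uc by (cases "j = m") auto
next
  have uc: "u \<in> carrier_vec n" "cinner u u = 1" using u unfolding unit_vec_n_def by auto
  have ub: "cinner u (b j) = 0" if "j < m" for j
    using cinner_swap[of "b j" u] orth[OF that] orthonormal_carrier[OF b that] uc by auto
  fix j k assume "j < Suc m" "k < Suc m"
  then show "cinner ((b(m := u)) j) ((b(m := u)) k) = (if j = k then 1 else 0)"
    using b uc ub orth unfolding orthonormal_def by (auto simp: less_Suc_eq)
qed

text \<open>Gram--Schmidt as a maximality argument: if the residual \<open>v - P v\<close> of some \<open>v \<in> F\<close> were nonzero,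
  it could be normalised and appended to the family.\<close>

lemma maximal_orthonormal_spans:
  assumes F: "subspace_n n F" and b: "orthonormal n b m" "\<forall>j<m. b j \<in> F"
    and maximal: "\<And>b'. orthonormal n b' (Suc m) \<Longrightarrow> \<not> (\<forall>j<Suc m. b' j \<in> F)"
  shows "F = basis_span n b m"
proof
  show "basis_span n b m \<subseteq> F"
    using basis_span_eq_comb basis_comb_in_subspace[OF F b(2)] by (metis subsetI)
  have Fc: "F \<subseteq> carrier_vec n" using F unfolding subspace_n_def by auto
  show "F \<subseteq> basis_span n b m"
  proof
    fix v assume v: "v \<in> F"
    define p where "p = basis_proj n b m v"
    have vc: "v \<in> carrier_vec n" and pc: "p \<in> carrier_vec n"
      using v Fc unfolding p_def basis_proj_def by auto
    have "p \<in> F" unfolding p_def basis_proj_def by (rule basis_comb_in_subspace[OF F b(2)])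
    then have "v + (-1) \<cdot>\<^sub>v p \<in> F" using F v unfolding subspace_n_def by auto
    moreover have "v + (-1) \<cdot>\<^sub>v p = v - p" using vc pc by (intro eq_vecI) auto
    ultimately have rF: "v - p \<in> F" by simp
    have "v - p = 0\<^sub>v n"
    proof (rule ccontr)
      assume "v - p \<noteq> 0\<^sub>v n"
      then have pos: "vnorm (v - p) > 0"
        using vnorm_zero_iff[of "v - p"] vnorm_nonneg[of "v - p"] pc by auto
      define u where "u = complex_of_real (1 / vnorm (v - p)) \<cdot>\<^sub>v (v - p)"
      have uF: "u \<in> F" using F rF unfolding u_def subspace_n_def by auto
      moreover have "vnorm u = 1" unfolding u_def vnorm_smult using pos by (simp add: norm_divide)
      ultimately have "unit_vec_n n u" using Fc unfolding unit_vec_n_iff by auto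
      moreover have "cinner (b j) u = 0" if "j < m" for j
        unfolding u_def p_def using cinner_basis_residual[OF b(1) vc that] by (simp add: cinner_smult_right)
      ultimately have "orthonormal n (b(m := u)) (Suc m)" by (rule orthonormal_extend[OF b(1)])
      moreover have "\<forall>j<Suc m. (b(m := u)) j \<in> F" using b(2) uF by (auto simp: less_Suc_eq)
      ultimately show False using maximal by blast
    qed
    then have "v = p" using vc pc
      by (metis carrier_vecD index_minus_vec(1) index_zero_vec(1) eq_vecI right_minus_eq)
    then show "v \<in> basis_span n b m" unfolding basis_span_def p_def using vc by simp
  qed
qed

lemma subspace_orthonormal_basis:
  assumes F: "subspace_n n F"
  obtains b m where "orthonormal n b m" "F = basis_span n b m"
proof -
  define M where "M = {m. \<exists>b. orthonormal n b m \<and> (\<forall>j<m. b j \<in> F)}"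
  have "M \<subseteq> {..n}" using orthonormal_length_le unfolding M_def by auto
  then have fin: "finite M" by (rule finite_subset) simp
  have "0 \<in> M" unfolding M_def orthonormal_def by auto
  then have "Max M \<in> M" using fin by (intro Max_in) auto
  then obtain b where b: "orthonormal n b (Max M)" "\<forall>j<Max M. b j \<in> F" unfolding M_def by auto
  have "F = basis_span n b (Max M)"
  proof (rule maximal_orthonormal_spans[OF F b])
    fix b' assume "orthonormal n b' (Suc (Max M))"
    then show "\<not> (\<forall>j<Suc (Max M). b' j \<in> F)" using Max_ge[OF fin] unfolding M_def by fastforce
  qed
  then show ?thesis using that b(1) by blast
qed

section \<open>The acceptance criterion\<close>

lemma bounded_columns_convergent_subseq_real:
  fixes X :: "nat \<Rightarrow> nat \<Rightarrow> real"
  assumes "\<And>i j. \<bar>X i j\<bar> \<le> B"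
  shows "\<exists>r. strict_mono r \<and> (\<forall>j<m. convergent (\<lambda>i. X (r i) j))"
proof (induction m)
  case 0
  show ?case by (rule exI[of _ id]) (simp add: strict_mono_def)
next
  case (Suc m)
  then obtain r where r: "strict_mono r" "\<forall>j<m. convergent (\<lambda>i. X (r i) j)" by auto
  obtain r' where r': "strict_mono r'" "monoseq (\<lambda>i. X (r (r' i)) m)"
    using seq_monosub[of "\<lambda>i. X (r i) m"] by blast
  have "Bseq (\<lambda>i. X (r (r' i)) m)" using assms by (intro BseqI'[of _ B]) auto
  then have conv: "convergent (\<lambda>i. X (r (r' i)) m)" using r' Bseq_monoseq_convergent by blast
  have "convergent (\<lambda>i. X (r (r' i)) j)" if j: "j < m" for j
  proof -
    obtain l where "(\<lambda>i. X (r i) j) \<longlonglongrightarrow> l" using r(2) j unfolding convergent_def by auto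
    then have "((\<lambda>i. X (r i) j) \<circ> r') \<longlonglongrightarrow> l" using LIMSEQ_subseq_LIMSEQ r' by blast
    then show ?thesis unfolding convergent_def o_def by auto
  qed
  then show ?case using conv strict_mono_o[OF r(1) r'(1)] by (auto simp: less_Suc_eq)
qed

lemma bounded_columns_convergent_subseq:
  fixes X :: "nat \<Rightarrow> nat \<Rightarrow> complex"
  assumes "\<And>i j. cmod (X i j) \<le> B"
  obtains r L where "strict_mono r" "\<And>j. j < m \<Longrightarrow> (\<lambda>i. X (r i) j) \<longlonglongrightarrow> L j"
proof -
  define Y where "Y = (\<lambda>i j. if even j then Re (X i (j div 2)) else Im (X i (j div 2)))"
  have "\<bar>Y i j\<bar> \<le> B" for i j
    unfolding Y_def by (auto intro: order_trans[OF abs_Re_le_cmod] order_trans[OF abs_Im_le_cmod] assms)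
  then obtain r where r: "strict_mono r" "\<forall>j<2*m. convergent (\<lambda>i. Y (r i) j)"
    using bounded_columns_convergent_subseq_real by blast
  have "\<exists>l. (\<lambda>i. X (r i) j) \<longlonglongrightarrow> l" if j: "j < m" for j
  proof -
    have "convergent (\<lambda>i. Y (r i) (2*j))" "convergent (\<lambda>i. Y (r i) (2*j+1))" using r(2) j by auto
    then obtain a b where "(\<lambda>i. Re (X (r i) j)) \<longlonglongrightarrow> a" "(\<lambda>i. Im (X (r i) j)) \<longlonglongrightarrow> b"
      unfolding Y_def convergent_def by auto
    then have "(\<lambda>i. X (r i) j) \<longlonglongrightarrow> Complex a b" unfolding tendsto_complex_iff by simp
    then show ?thesis by blast
  qed
  then obtain L where "\<forall>j<m. (\<lambda>i. X (r i) j) \<longlonglongrightarrow> L j" by metis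
  then show ?thesis using that r(1) by blast
qed

text \<open>\<open>frequently_above a \<lambda>\<close> says \<open>limsup a > \<lambda>\<close>, in the form needed here.\<close>

definition frequently_above :: "(nat \<Rightarrow> real) \<Rightarrow> real \<Rightarrow> bool" where
  "frequently_above a lam \<longleftrightarrow> (\<exists>\<epsilon>>0. infinite {k. a k > lam + \<epsilon>})"

definition overlap_above :: "complex vec \<Rightarrow> (nat \<Rightarrow> complex vec) \<Rightarrow> real \<Rightarrow> bool" where
  "overlap_above \<psi> s lam \<longleftrightarrow>
     (\<exists>ns \<delta>. strict_mono (ns :: nat \<Rightarrow> nat) \<and> 0 < \<delta> \<and> (\<forall>i. lam + \<delta> \<le> (cmod (cinner \<psi> (s (ns i))))\<^sup>2))"

lemma f_ND_gt_iff_overlap_above: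
  assumes qa: "is_QA \<Sigma> n s0 U F" and w: "w \<in> omega_words \<Sigma>" and lam: "0 \<le> lam"
  shows "lam < f_ND n s0 U F w \<longleftrightarrow> (\<exists>\<psi>\<in>F. unit_vec_n n \<psi> \<and> overlap_above \<psi> (nd_run s0 U w) lam)"
proof -
  define s where "s = nd_run s0 U w"
  define S where "S = {(INF i. (cmod (cinner \<psi> (s (ns i))))\<^sup>2) | \<psi> (ns :: nat \<Rightarrow> nat).
                        \<psi> \<in> F \<and> unit_vec_n n \<psi> \<and> strict_mono ns}"
  have f: "f_ND n s0 U F w = (if S = {} then 0 else Sup S)"
    unfolding f_ND_def S_def s_def Let_def by simp
  have bdd: "bdd_below (range (\<lambda>i. (cmod (cinner \<psi> (s (ns i))))\<^sup>2))" for \<psi> ns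
    by (rule bdd_belowI[of _ 0]) auto
  have le1: "(cmod (cinner \<psi> (s k)))\<^sup>2 \<le> 1" if "unit_vec_n n \<psi>" for \<psi> k
    using norm_cinner_le_1[of \<psi> n "s k"] that nd_run_unit[OF qa w, of k]
    unfolding unit_vec_n_iff s_def by (simp add: power_le_one)
  have "x \<le> 1" if "x \<in> S" for x
    using that le1 unfolding S_def by (auto intro: order_trans[OF cINF_lower[OF bdd]])
  then have bddS: "bdd_above S" by (intro bdd_aboveI) auto
  show ?thesis
  proof
    assume "lam < f_ND n s0 U F w"
    then have "S \<noteq> {}" "lam < Sup S" using lam f by (auto split: if_splits)
    then obtain x where "x \<in> S" "lam < x" using less_cSup_iff[OF _ bddS] by auto
    then obtain \<psi> and ns :: "nat \<Rightarrow> nat" where x: "x = (INF i. (cmod (cinner \<psi> (s (ns i))))\<^sup>2)"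
      and \<psi>: "\<psi> \<in> F" "unit_vec_n n \<psi>" "strict_mono ns" and "lam < x" unfolding S_def by blast
    have "lam + (x - lam) \<le> (cmod (cinner \<psi> (s (ns i))))\<^sup>2" for i
      unfolding x by (simp add: cINF_lower[OF bdd])
    then have "overlap_above \<psi> s lam"
      unfolding overlap_above_def using \<psi>(3) \<open>lam < x\<close>
      by (intro exI[where x = ns] exI[where x = "x - lam"]) auto
    then show "\<exists>\<psi>\<in>F. unit_vec_n n \<psi> \<and> overlap_above \<psi> (nd_run s0 U w) lam"
      using \<psi> unfolding s_def by blast
  next
    assume "\<exists>\<psi>\<in>F. unit_vec_n n \<psi> \<and> overlap_above \<psi> (nd_run s0 U w) lam"
    then obtain \<psi> and ns :: "nat \<Rightarrow> nat" and \<delta>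
      where \<psi>: "\<psi> \<in> F" "unit_vec_n n \<psi>" "strict_mono ns" and "0 < \<delta>"
      and bound: "\<And>i. lam + \<delta> \<le> (cmod (cinner \<psi> (s (ns i))))\<^sup>2" unfolding s_def overlap_above_def by blast
    define x where "x = (INF i. (cmod (cinner \<psi> (s (ns i))))\<^sup>2)"
    have xS: "x \<in> S" unfolding S_def x_def using \<psi> by blast
    have "lam < x" unfolding x_def using bound \<open>0 < \<delta>\<close>
      by (intro order.strict_trans2[OF _ cINF_greatest]) auto
    also have "x \<le> Sup S" using xS bddS by (rule cSup_upper)
    finally show "lam < f_ND n s0 U F w" using f xS by auto
  qed
qed

lemma basis_span_unit_limit:
  assumes b: "orthonormal n b m" and s: "\<And>i. s i \<in> carrier_vec n"
    and L: "\<And>j. j < m \<Longrightarrow> (\<lambda>i. cinner (b j) (s i)) \<longlonglongrightarrow> L j"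
    and pos: "0 < (\<Sum>j<m. (cmod (L j))\<^sup>2)"
  obtains \<psi> where "\<psi> \<in> basis_span n b m" "unit_vec_n n \<psi>"
    "(\<lambda>i. (cmod (cinner \<psi> (s i)))\<^sup>2) \<longlonglongrightarrow> (\<Sum>j<m. (cmod (L j))\<^sup>2)"
proof -
  define A where "A = (\<Sum>j<m. (cmod (L j))\<^sup>2)"
  define c where "c = (\<lambda>j. L j / complex_of_real (sqrt A))"
  define \<psi> where "\<psi> = basis_comb n b m c"
  have sqrtA: "0 < sqrt A" "sqrt A * sqrt A = A" using pos unfolding A_def by auto
  have "(vnorm \<psi>)\<^sup>2 = (\<Sum>j<m. (cmod (c j))\<^sup>2)"
    unfolding \<psi>_def by (rule vnorm_basis_comb_power2[OF b])
  also have "\<dots> = A / (sqrt A * sqrt A)"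
    unfolding c_def A_def by (simp add: norm_divide power_divide sum_divide_distrib power2_eq_square)
  finally have "vnorm \<psi> = 1" using sqrtA vnorm_nonneg[of \<psi>] by (simp add: power2_eq_1_iff)
  then have unit: "unit_vec_n n \<psi>" unfolding unit_vec_n_iff \<psi>_def by simp
  have "cinner \<psi> (s i) = (\<Sum>j<m. cnj (c j) * cinner (b j) (s i))" for i
    unfolding \<psi>_def using b s by (intro cinner_basis_comb_left) (auto simp: orthonormal_def)
  moreover have "(\<lambda>i. \<Sum>j<m. cnj (c j) * cinner (b j) (s i)) \<longlonglongrightarrow> (\<Sum>j<m. cnj (c j) * L j)"
    using L by (intro tendsto_intros) auto
  moreover have "(\<Sum>j<m. cnj (c j) * L j) = complex_of_real (A / sqrt A)"
    unfolding c_def A_def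
    by (simp add: sum_divide_distrib complex_of_real_cmod_power2 mult.commute)
  moreover have "A / sqrt A = sqrt A" using sqrtA by (simp add: field_simps)
  ultimately have "(\<lambda>i. cinner \<psi> (s i)) \<longlonglongrightarrow> complex_of_real (sqrt A)" by simp
  then have "(\<lambda>i. (cmod (cinner \<psi> (s i)))\<^sup>2) \<longlonglongrightarrow> (cmod (complex_of_real (sqrt A)))\<^sup>2"
    by (intro tendsto_intros)
  moreover have "(cmod (complex_of_real (sqrt A)))\<^sup>2 = A" using sqrtA by simp
  ultimately have "(\<lambda>i. (cmod (cinner \<psi> (s i)))\<^sup>2) \<longlonglongrightarrow> A" by simp
  then show ?thesis unfolding A_def by (rule that[OF basis_comb_in_span[OF b, of c, folded \<psi>_def] unit])
qed

text \<open>A subsequence along which the coordinates \<open>\<langle>b\<^sub>j|s\<^sub>k\<rangle>\<close> converge yields the witness \<open>\<psi>\<close>.\<close>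

lemma frequently_above_proj_norm2_imp_overlap_above:
  assumes b: "orthonormal n b m" and s: "\<And>k. s k \<in> carrier_vec n" "\<And>k. vnorm (s k) = 1"
    and lam: "0 \<le> lam" and freq: "frequently_above (\<lambda>k. proj_norm2 b m (s k)) lam"
  shows "\<exists>\<psi>\<in>basis_span n b m. unit_vec_n n \<psi> \<and> overlap_above \<psi> s lam"
proof -
  obtain \<epsilon> where \<epsilon>: "0 < \<epsilon>" and inf: "infinite {k. proj_norm2 b m (s k) > lam + \<epsilon>}"
    using freq unfolding frequently_above_def by auto
  obtain e :: "nat \<Rightarrow> nat" where e: "strict_mono e" "\<And>i. proj_norm2 b m (s (e i)) > lam + \<epsilon>"
    using infinite_enumerate[OF inf] by auto
  define X where "X = (\<lambda>i j. if j < m then cinner (b j) (s (e i)) else 0)"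
  have "cmod (X i j) \<le> 1" for i j
    unfolding X_def using norm_cinner_le_1[OF orthonormal_carrier[OF b] s(1)] orthonormal_vnorm[OF b] s(2)
    by auto
  then obtain r L where r: "strict_mono r" and L: "\<And>j. j < m \<Longrightarrow> (\<lambda>i. X (r i) j) \<longlonglongrightarrow> L j"
    using bounded_columns_convergent_subseq by blast
  define t where "t = e \<circ> r"
  have t: "strict_mono t" unfolding t_def using e(1) r by (rule strict_mono_o)
  have "(\<lambda>i. proj_norm2 b m (s (t i))) \<longlonglongrightarrow> (\<Sum>j<m. (cmod (L j))\<^sup>2)"
    unfolding proj_norm2_def using L by (intro tendsto_intros) (simp add: X_def t_def)
  then have A: "lam + \<epsilon> \<le> (\<Sum>j<m. (cmod (L j))\<^sup>2)"
    by (rule LIMSEQ_le_const) (use e(2) t_def in \<open>auto intro: less_imp_le\<close>)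
  moreover have "\<And>j. j < m \<Longrightarrow> (\<lambda>i. cinner (b j) (s (t i))) \<longlonglongrightarrow> L j"
    using L unfolding X_def t_def by simp
  moreover have "0 < (\<Sum>j<m. (cmod (L j))\<^sup>2)" using \<epsilon> lam A by linarith
  ultimately obtain \<psi> where \<psi>: "\<psi> \<in> basis_span n b m" "unit_vec_n n \<psi>"
    and lim: "(\<lambda>i. (cmod (cinner \<psi> (s (t i))))\<^sup>2) \<longlonglongrightarrow> (\<Sum>j<m. (cmod (L j))\<^sup>2)"
    using basis_span_unit_limit[OF b s(1)] by blast
  have "lam + \<epsilon>/2 < (\<Sum>j<m. (cmod (L j))\<^sup>2)" using A \<epsilon> by simp
  then obtain N where N: "\<And>i. i \<ge> N \<Longrightarrow> lam + \<epsilon>/2 < (cmod (cinner \<psi> (s (t i))))\<^sup>2"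
    using order_tendstoD(1)[OF lim] unfolding eventually_sequentially by auto
  have "strict_mono (\<lambda>i. t (i + N))" using t by (simp add: strict_mono_def)
  then have "overlap_above \<psi> s lam"
    unfolding overlap_above_def using N \<epsilon>
    by (intro exI[where x = "\<lambda>i. t (i + N)"] exI[where x = "\<epsilon>/2"]) (auto intro: less_imp_le)
  then show ?thesis using \<psi> by blast
qed

lemma overlap_above_imp_frequently_above_proj_norm2:
  assumes b: "orthonormal n b m" and s: "\<And>k. s k \<in> carrier_vec n"
    and \<psi>: "\<psi> \<in> basis_span n b m" "unit_vec_n n \<psi>" and overlap: "overlap_above \<psi> s lam"
  shows "frequently_above (\<lambda>k. proj_norm2 b m (s k)) lam"
proof -
  obtain ns :: "nat \<Rightarrow> nat" and \<delta> where ns: "strict_mono ns" and \<delta>: "0 < \<delta>"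
    and bound: "\<And>i. lam + \<delta> \<le> (cmod (cinner \<psi> (s (ns i))))\<^sup>2"
    using overlap unfolding overlap_above_def by blast
  have "(cmod (cinner \<psi> (s k)))\<^sup>2 \<le> proj_norm2 b m (s k)" for k
    using cinner_power2_le_proj_norm2[OF b \<psi>(1) _ s] \<psi>(2) unfolding unit_vec_n_iff by blast
  moreover have "lam + \<delta>/2 < lam + \<delta>" using \<delta> by simp
  ultimately have "lam + \<delta>/2 < proj_norm2 b m (s (ns i))" for i
    using bound[of i] by (meson order.strict_trans2 order.trans)
  then have "range ns \<subseteq> {k. proj_norm2 b m (s k) > lam + \<delta>/2}" by auto
  moreover have "infinite (range ns)"
    using ns by (intro range_inj_infinite) (simp add: strict_mono_imp_inj_on)
  ultimately show ?thesis
    unfolding frequently_above_def using \<delta> by (metis finite_subset half_gt_zero)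
qed

theorem f_ND_gt_iff:
  assumes qa: "is_QA \<Sigma> n s0 U (basis_span n b m)" and b: "orthonormal n b m"
    and w: "w \<in> omega_words \<Sigma>" and lam: "0 \<le> lam"
  shows "lam < f_ND n s0 U (basis_span n b m) w \<longleftrightarrow>
    frequently_above (\<lambda>k. proj_norm2 b m (nd_run s0 U w k)) lam"
  unfolding f_ND_gt_iff_overlap_above[OF qa w lam]
  using frequently_above_proj_norm2_imp_overlap_above[where s = "nd_run s0 U w",
      OF b nd_run_carrier[OF qa w] vnorm_nd_run[OF qa w] lam]
    overlap_above_imp_frequently_above_proj_norm2[where s = "nd_run s0 U w", OF b nd_run_carrier[OF qa w]]
  by blast

lemma QBA_class_obtain_basis:
  assumes "L \<in> QBA_class \<Sigma> lam"
  obtains n s0 U b m where "is_QA \<Sigma> n s0 U (basis_span n b m)" "orthonormal n b m"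
    "L = QBA_lang \<Sigma> n s0 U (basis_span n b m) lam"
proof -
  obtain n s0 U F where qa: "is_QA \<Sigma> n s0 U F" and L: "L = QBA_lang \<Sigma> n s0 U F lam"
    using assms unfolding QBA_class_def by blast
  moreover obtain b m where "orthonormal n b m" "F = basis_span n b m"
    using subspace_orthonormal_basis qa unfolding is_QA_def by blast
  ultimately show ?thesis using that by blast
qed

lemma QBA_lang_basis_span:
  assumes qa: "is_QA \<Sigma> n s0 U (basis_span n b m)" and b: "orthonormal n b m" and lam: "0 \<le> lam"
  shows "QBA_lang \<Sigma> n s0 U (basis_span n b m) lam =
    {w \<in> omega_words \<Sigma>. frequently_above (\<lambda>k. proj_norm2 b m (nd_run s0 U w k)) lam}"
  unfolding QBA_lang_def using f_ND_gt_iff[OF qa b _ lam] by blast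

section \<open>Recurrence of unitary orbits and a pumping lemma\<close>

lemma bounded_vec_seq_convergent_subseq:
  fixes y :: "nat \<Rightarrow> complex vec"
  assumes y: "\<And>d. y d \<in> carrier_vec n" and bound: "\<And>d. vnorm (y d) \<le> B"
  obtains r v where "strict_mono r" "v \<in> carrier_vec n" "(\<lambda>d. vnorm (y (r d) - v)) \<longlonglongrightarrow> 0"
proof -
  define X where "X = (\<lambda>d i. if i < n then y d $ i else 0)"
  have "cmod (X d i) \<le> B" for d i
  proof (cases "i < n")
    case True
    then show ?thesis
      using norm_index_le_vnorm[of i "y d"] y[of d] bound[of d] unfolding X_def by auto
  next
    case False
    then show ?thesis using vnorm_nonneg[of "y d"] bound[of d] unfolding X_def by auto
  qed
  then obtain r L where r: "strict_mono r" and L: "\<And>i. i < n \<Longrightarrow> (\<lambda>d. X (r d) i) \<longlonglongrightarrow> L i"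
    by (rule bounded_columns_convergent_subseq[where X=X and B=B and m=n]) blast
  have "vnorm (y (r d) - vec n L) = sqrt (\<Sum>i<n. (cmod (X (r d) i - L i))\<^sup>2)" for d
    unfolding vnorm_def L2_set_def X_def using y[of "r d"] by (intro arg_cong[where f=sqrt] sum.cong) auto
  moreover have "(\<lambda>d. sqrt (\<Sum>i<n. (cmod (X (r d) i - L i))\<^sup>2)) \<longlonglongrightarrow> sqrt (\<Sum>i<n. (cmod (L i - L i))\<^sup>2)"
    using L by (intro tendsto_intros) auto
  ultimately have "(\<lambda>d. vnorm (y (r d) - vec n L)) \<longlonglongrightarrow> 0" by simp
  then show ?thesis by (rule that[OF r vec_carrier])
qed

lemma unitary_orbit:
  assumes V: "unitary_n n V" and y0: "y 0 \<in> carrier_vec n" and y: "\<And>d. y (Suc d) = V *\<^sub>v y d"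
  shows "y d \<in> carrier_vec n" "vnorm (y d) = vnorm (y 0)" "vnorm (y (a + d) - y a) = vnorm (y d - y 0)"
proof -
  have Vc: "V \<in> carrier_mat n n" using V unfolding unitary_n_def by simp
  show yc: "y d \<in> carrier_vec n" for d by (induction d) (use y0 y Vc in auto)
  show "vnorm (y d) = vnorm (y 0)" by (induction d) (use y V yc vnorm_unitary in auto)
  show "vnorm (y (a + d) - y a) = vnorm (y d - y 0)"
  proof (induction a)
    case (Suc a)
    have "y (Suc a + d) - y (Suc a) = V *\<^sub>v (y (a + d) - y a)"
      using y Vc yc by (simp add: mult_minus_distrib_mat_vec)
    then show ?case using Suc vnorm_unitary[OF V] yc by auto
  qed simp
qed

text \<open>Poincar\'e recurrence for a unitary: by compactness two far-apart points \<open>y (r N)\<close>, \<open>y (r d)\<close>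
  of the orbit are close, and since \<open>V\<close> is an isometry their distance is that of \<open>y (r d - r N)\<close>
  to the start.\<close>

lemma unitary_orbit_recurrent:
  assumes V: "unitary_n n V" and y0: "y 0 \<in> carrier_vec n"
    and y: "\<And>d. y (Suc d) = V *\<^sub>v y d" and \<eta>: "0 < \<eta>"
  shows "infinite {d. vnorm (y d - y 0) < \<eta>}"
proof -
  note orbit = unitary_orbit[OF V y0 y]
  obtain r v where r: "strict_mono r" and v: "v \<in> carrier_vec n"
    and lim: "(\<lambda>d. vnorm (y (r d) - v)) \<longlonglongrightarrow> 0"
    by (metis bounded_vec_seq_convergent_subseq[where y=y and B="vnorm (y 0)"] orbit(1,2) order_refl)
  have "0 < \<eta> / 2" using \<eta> by simp
  then obtain N where N: "\<And>d. d \<ge> N \<Longrightarrow> vnorm (y (r d) - v) < \<eta> / 2"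
    using order_tendstoD(2)[OF lim] unfolding eventually_sequentially by blast
  have "r d - r N \<in> {d. vnorm (y d - y 0) < \<eta>}" if "d > N" for d
  proof -
    have "r N < r d" using r that by (simp add: strict_mono_less)
    then have "vnorm (y (r d - r N) - y 0) = vnorm (y (r d) - y (r N))"
      using orbit(3)[of "r N" "r d - r N"] by simp
    also have "\<dots> \<le> vnorm (y (r d) - v) + vnorm (v - y (r N))"
      using orbit(1)[of "r d"] orbit(1)[of "r N"] v by (intro vnorm_triangle) (metis carrier_vecD)+
    also have "vnorm (v - y (r N)) = vnorm (y (r N) - v)"
      using orbit(1)[of "r N"] v by (intro vnorm_minus_commute) (metis carrier_vecD)
    also have "vnorm (y (r d) - v) + vnorm (y (r N) - v) < \<eta>"
      using N[of d] N[of N] that by simp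
    finally show ?thesis by simp
  qed
  then have "(\<lambda>d. r d - r N) ` {N<..} \<subseteq> {d. vnorm (y d - y 0) < \<eta>}" by auto
  moreover have "inj_on (\<lambda>d. r d - r N) {N<..}"
  proof (rule inj_onI)
    fix x x' assume x: "x \<in> {N<..}" "x' \<in> {N<..}" and eq: "r x - r N = r x' - r N"
    have "r N < r x" "r N < r x'" using x strict_mono_less[OF r] by auto
    then have "r x = r x'" using eq by arith
    then show "x = x'" using strict_mono_eq[OF r] by simp
  qed
  then have "infinite ((\<lambda>d. r d - r N) ` {N<..})"
    by (simp add: finite_image_iff infinite_Ioi)
  ultimately show ?thesis using finite_subset by blast
qed

lemma proj_norm2_diff_le:
  assumes b: "orthonormal n b m" and u: "u \<in> carrier_vec n" "vnorm u \<le> 1"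
    and v: "v \<in> carrier_vec n" "vnorm v \<le> 1"
  shows "proj_norm2 b m u - proj_norm2 b m v \<le> 2 * real m * vnorm (u - v)"
proof -
  have "(cmod (cinner (b j) u))\<^sup>2 - (cmod (cinner (b j) v))\<^sup>2 \<le> 2 * vnorm (u - v)" if j: "j < m" for j
  proof -
    have bj: "b j \<in> carrier_vec n" "vnorm (b j) = 1"
      using orthonormal_carrier[OF b j] orthonormal_vnorm[OF b j] by auto
    have "cmod (cinner (b j) x) \<le> vnorm x" if "x \<in> carrier_vec n" for x
      using norm_cinner_le[of "b j" x] bj that by simp
    then have le: "cmod (cinner (b j) u) \<le> 1" "cmod (cinner (b j) v) \<le> 1"
      "cmod (cinner (b j) u - cinner (b j) v) \<le> vnorm (u - v)"
      using u v by (force simp: cinner_minus_right[symmetric])+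
    have "(cmod (cinner (b j) u))\<^sup>2 - (cmod (cinner (b j) v))\<^sup>2
        = (cmod (cinner (b j) u) - cmod (cinner (b j) v)) * (cmod (cinner (b j) u) + cmod (cinner (b j) v))"
      by (simp add: power2_eq_square algebra_simps)
    also have "\<dots> \<le> vnorm (u - v) * 2"
      using le norm_triangle_ineq2[of "cinner (b j) u" "cinner (b j) v"] vnorm_nonneg[of "u - v"]
      by (intro mult_mono) auto
    finally show ?thesis by simp
  qed
  then have "proj_norm2 b m u - proj_norm2 b m v \<le> (\<Sum>j<m. 2 * vnorm (u - v))"
    unfolding proj_norm2_def sum_subtractf[symmetric] by (intro sum_mono) auto
  then show ?thesis by simp
qed

text \<open>Cut \<open>w\<close> where its weight exceeds \<open>\<lambda> + \<epsilon>\<close>; from there on the run follows the orbit of the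
  unitary \<open>U \<beta>\<close>, which returns close to that point infinitely often.\<close>

lemma QBA_class_prefix_const_suffix:
  assumes L: "L \<in> QBA_class \<Sigma> lam" and lam: "0 \<le> lam" and wL: "w \<in> L" and \<beta>: "\<beta> \<in> \<Sigma>"
  obtains k0 where "(\<lambda>i. if i < k0 then w i else \<beta>) \<in> L"
proof -
  obtain n s0 U b m where qa: "is_QA \<Sigma> n s0 U (basis_span n b m)" and b: "orthonormal n b m"
    and L_eq: "L = QBA_lang \<Sigma> n s0 U (basis_span n b m) lam"
    using QBA_class_obtain_basis[OF L] by blast
  let ?Q = "\<lambda>w k. proj_norm2 b m (nd_run s0 U w k)"
  have w: "w \<in> omega_words \<Sigma>" "frequently_above (?Q w) lam"
    using wL unfolding L_eq QBA_lang_basis_span[OF qa b lam] by auto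
  then obtain \<epsilon> where \<epsilon>: "0 < \<epsilon>" and "infinite {k. ?Q w k > lam + \<epsilon>}"
    unfolding frequently_above_def by auto
  then obtain k0 where k0: "?Q w k0 > lam + \<epsilon>" using not_finite_existsD by blast
  define w' where "w' = (\<lambda>i. if i < k0 then w i else \<beta>)"
  have w': "w' \<in> omega_words \<Sigma>" using w \<beta> unfolding w'_def omega_words_def by auto
  have prefix: "nd_run s0 U w' k = nd_run s0 U w k" if "k \<le> k0" for k
    using that by (induction k) (auto simp: w'_def)
  define y where "y = (\<lambda>d. nd_run s0 U w' (k0 + d))"
  have y: "y d \<in> carrier_vec n" "vnorm (y d) = 1" for d
    unfolding y_def using nd_run_unit[OF qa w'] by auto
  have V: "unitary_n n (U \<beta>)" using qa \<beta> unfolding is_QA_def by auto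
  define \<eta> where "\<eta> = \<epsilon> / (4 * real m + 2)"
  have \<eta>: "0 < \<eta>" "2 * real m * \<eta> \<le> \<epsilon> / 2" unfolding \<eta>_def using \<epsilon> by (auto simp: field_simps)
  have "infinite {d. vnorm (y d - y 0) < \<eta>}"
    by (rule unitary_orbit_recurrent[OF V y(1) _ \<eta>(1)]) (simp add: y_def w'_def)
  moreover have "{d. vnorm (y d - y 0) < \<eta>} \<subseteq> (\<lambda>k. k - k0) ` {k. ?Q w' k > lam + \<epsilon> / 2}"
  proof
    fix d assume d: "d \<in> {d. vnorm (y d - y 0) < \<eta>}"
    have "proj_norm2 b m (y 0) - proj_norm2 b m (y d) \<le> 2 * real m * vnorm (y 0 - y d)"
      using y by (intro proj_norm2_diff_le[OF b]) auto
    also have "vnorm (y 0 - y d) = vnorm (y d - y 0)"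
      using y(1)[of 0] y(1)[of d] by (intro vnorm_minus_commute) (metis carrier_vecD)
    also have "2 * real m * vnorm (y d - y 0) \<le> 2 * real m * \<eta>"
      using d by (intro mult_left_mono) auto
    finally have "lam + \<epsilon> / 2 < ?Q w' (k0 + d)"
      using k0 prefix[of k0] \<eta>(2) unfolding y_def by simp
    then show "d \<in> (\<lambda>k. k - k0) ` {k. ?Q w' k > lam + \<epsilon> / 2}" by force
  qed
  ultimately have "infinite {k. ?Q w' k > lam + \<epsilon> / 2}" using finite_subset by blast
  then have "frequently_above (?Q w') lam"
    unfolding frequently_above_def using \<epsilon> half_gt_zero by blast
  then have "w' \<in> L" unfolding L_eq QBA_lang_basis_span[OF qa b lam] using w' by simp
  then show ?thesis using that unfolding w'_def by blast
qed

section \<open>Permutation automata and counting languages\<close>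

definition perm_mat :: "nat \<Rightarrow> (nat \<Rightarrow> nat) \<Rightarrow> complex mat" where
  "perm_mat n p = mat n n (\<lambda>(i,j). if i = p j then 1 else 0)"

lemma perm_mat_mult_unit_vec:
  assumes j: "j < n"
  shows "perm_mat n p *\<^sub>v unit_vec n j = unit_vec n (p j)"
proof (rule eq_vecI)
  fix i assume "i < dim_vec (unit_vec n (p j))"
  then have i: "i < n" by simp
  have "(perm_mat n p *\<^sub>v unit_vec n j) $ i =
      (\<Sum>k\<in>{0..<n}. (if i = p k then 1 else 0) * (if k = j then 1 else 0))"
    using i by (simp add: perm_mat_def scalar_prod_def unit_vec_def)
  also have "\<dots> = (\<Sum>k\<in>{0..<n}. if k = j then (if i = p j then 1 else 0) else (0::complex))"
    by (rule sum.cong) auto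
  also have "\<dots> = unit_vec n (p j) $ i" using i j by (simp add: sum.delta unit_vec_def)
  finally show "(perm_mat n p *\<^sub>v unit_vec n j) $ i = unit_vec n (p j) $ i" .
qed (simp add: perm_mat_def)

lemma perm_mat_unitary:
  assumes p: "\<forall>j<n. p j < n" and inj: "inj_on p {..<n}"
  shows "unitary_n n (perm_mat n p)"
  unfolding unitary_n_iff_columns
proof (intro conjI allI impI)
  show "perm_mat n p \<in> carrier_mat n n" unfolding perm_mat_def by simp
  fix k l assume k: "k < n" and l: "l < n"
  have "(\<Sum>i<n. cnj (perm_mat n p $$ (i,k)) * perm_mat n p $$ (i,l)) =
      (\<Sum>i<n. if i = p k then (if p k = p l then 1 else 0) else (0::complex))"
    using k l by (intro sum.cong) (auto simp: perm_mat_def)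
  also have "\<dots> = (if k = l then 1 else 0)"
    using p k l inj by (auto simp: sum.delta inj_on_def)
  finally show "(\<Sum>i<n. cnj (perm_mat n p $$ (i,k)) * perm_mat n p $$ (i,l)) = (if k = l then 1 else 0)" .
qed

primrec perm_state :: "('a \<Rightarrow> nat \<Rightarrow> nat) \<Rightarrow> nat \<Rightarrow> (nat \<Rightarrow> 'a) \<Rightarrow> nat \<Rightarrow> nat" where
  "perm_state p j0 w 0 = j0"
| "perm_state p j0 w (Suc k) = p (w k) (perm_state p j0 w k)"

lemma frequently_above_indicator:
  assumes "0 \<le> lam" "lam < 1"
  shows "frequently_above (\<lambda>k. if P k then 1 else 0) lam \<longleftrightarrow> infinite {k. P k}"
proof
  assume "frequently_above (\<lambda>k. if P k then 1 else 0) lam"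
  then obtain \<epsilon> where "0 < \<epsilon>" "infinite {k. (if P k then 1 else 0) > lam + \<epsilon>}"
    unfolding frequently_above_def by auto
  moreover have "{k. (if P k then 1 else 0) > lam + \<epsilon>} \<subseteq> {k. P k}" using \<open>0 < \<epsilon>\<close> assms by auto
  ultimately show "infinite {k. P k}" using finite_subset by blast
next
  assume "infinite {k. P k}"
  moreover have "0 \<le> lam + (1 - lam) / 2" "lam + (1 - lam) / 2 < 1"
    using assms by (simp_all add: field_simps)
  ultimately have "{k. P k} = {k. (if P k then 1 else 0) > lam + (1 - lam) / 2}" by auto
  with \<open>infinite {k. P k}\<close> show "frequently_above (\<lambda>k. if P k then 1 else 0) lam"
    unfolding frequently_above_def using assms by (intro exI[of _ "(1 - lam) / 2"]) auto
qed

lemma perm_automaton_lang_in_QBA_class: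
  assumes \<Sigma>: "finite \<Sigma>" and n: "j0 < n" "t < n"
    and p: "\<forall>\<sigma>\<in>\<Sigma>. \<forall>j<n. p \<sigma> j < n" "\<forall>\<sigma>\<in>\<Sigma>. inj_on (p \<sigma>) {..<n}"
    and lam: "0 \<le> lam" "lam < 1"
  shows "{w \<in> omega_words \<Sigma>. infinite {k. perm_state p j0 w k = t}} \<in> QBA_class \<Sigma> lam"
proof -
  define U where "U = (\<lambda>\<sigma>. perm_mat n (p \<sigma>))"
  define b where "b = (\<lambda>_::nat. unit_vec n t :: complex vec)"
  have b: "orthonormal n b 1" unfolding orthonormal_def b_def using n by (simp add: cinner_unit_vec)
  have qa: "is_QA \<Sigma> n (unit_vec n j0) U (basis_span n b 1)"
    unfolding is_QA_def unit_vec_n_def U_def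
    using \<Sigma> n p basis_span_subspace[OF b] by (auto simp: cinner_unit_vec intro: perm_mat_unitary)
  have run: "nd_run (unit_vec n j0) U w k = unit_vec n (perm_state p j0 w k) \<and> perm_state p j0 w k < n"
    if w: "w \<in> omega_words \<Sigma>" for w k
  proof (induction k)
    case (Suc k)
    have "w k \<in> \<Sigma>" using w unfolding omega_words_def by auto
    then show ?case using Suc p by (simp add: U_def perm_mat_mult_unit_vec)
  qed (use n in simp)
  have weight: "(\<lambda>k. proj_norm2 b 1 (nd_run (unit_vec n j0) U w k)) =
      (\<lambda>k. if perm_state p j0 w k = t then 1 else 0)" if "w \<in> omega_words \<Sigma>" for w
    using run[OF that] n unfolding proj_norm2_def b_def by (auto simp: cinner_unit_vec)
  have "QBA_lang \<Sigma> n (unit_vec n j0) U (basis_span n b 1) lam =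
      {w \<in> omega_words \<Sigma>. infinite {k. perm_state p j0 w k = t}}"
    unfolding QBA_lang_basis_span[OF qa b lam(1)]
  proof (intro Collect_cong conj_cong refl)
    fix w assume "w \<in> omega_words \<Sigma>"
    show "frequently_above (\<lambda>k. proj_norm2 b 1 (nd_run (unit_vec n j0) U w k)) lam \<longleftrightarrow>
        infinite {k. perm_state p j0 w k = t}"
      unfolding weight[OF \<open>w \<in> omega_words \<Sigma>\<close>] by (rule frequently_above_indicator[OF lam])
  qed
  then show ?thesis unfolding QBA_class_def using qa by blast
qed

definition letter_count :: "'a \<Rightarrow> (nat \<Rightarrow> 'a) \<Rightarrow> nat \<Rightarrow> nat" where
  "letter_count a w i = card {j. j < i \<and> w j = a}"

lemma letter_count_0 [simp]: "letter_count a w 0 = 0"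
  unfolding letter_count_def by simp

lemma letter_count_Suc: "letter_count a w (Suc i) = letter_count a w i + (if w i = a then 1 else 0)"
proof -
  have "{j. j < Suc i \<and> w j = a} = (if w i = a then insert i else id) {j. j < i \<and> w j = a}"
    by (auto simp: less_Suc_eq)
  then show ?thesis unfolding letter_count_def by simp
qed

lemma letter_count_le_card: "finite {j. w j = a} \<Longrightarrow> letter_count a w i \<le> card {j. w j = a}"
  unfolding letter_count_def by (rule card_mono) auto

lemma letter_count_const: "letter_count c (\<lambda>_. a) i = (if c = a then i else 0)"
  unfolding letter_count_def by simp

lemma letter_count_prefix_const:
  assumes "a \<noteq> b"
  shows "letter_count a (\<lambda>j. if j < k0 then a else b) i = min i k0"
    and "letter_count b (\<lambda>j. if j < k0 then a else b) i = i - k0"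
proof -
  have "{j. j < i \<and> (if j < k0 then a else b) = a} = {..<min i k0}" using assms by auto
  then show "letter_count a (\<lambda>j. if j < k0 then a else b) i = min i k0"
    unfolding letter_count_def by simp
  have "{j. j < i \<and> (if j < k0 then a else b) = b} = {k0..<i}" using assms by auto
  then show "letter_count b (\<lambda>j. if j < k0 then a else b) i = i - k0"
    unfolding letter_count_def by simp
qed

text \<open>The count grows in unit steps, so when it is unbounded it takes every value.\<close>

lemma letter_count_surj:
  assumes inf: "infinite {j. w j = a}"
  shows "\<exists>i. letter_count a w i = v"
proof (induction v)
  case 0
  show ?case by (rule exI[of _ 0]) simp
next
  case (Suc v)
  then obtain i where i: "letter_count a w i = v" by blast
  have ex: "\<exists>j. i \<le> j \<and> w j = a" using inf unfolding infinite_nat_iff_unbounded_le by auto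
  define j0 where "j0 = (LEAST j. i \<le> j \<and> w j = a)"
  have j0: "i \<le> j0" "w j0 = a" using LeastI_ex[OF ex] unfolding j0_def by auto
  have before: "\<not> (i \<le> j \<and> w j = a)" if "j < j0" for j
    using not_less_Least[OF that[unfolded j0_def]] by simp
  have "{j. j < j0 \<and> w j = a} = {j. j < i \<and> w j = a}"
  proof (intro Collect_cong iffI conjI)
    fix j assume "j < j0 \<and> w j = a"
    then show "j < i" using before[of j] by simp
  qed (use j0(1) in auto)
  then have "letter_count a w (Suc j0) = Suc v"
    using i j0(2) letter_count_Suc[of a w j0] unfolding letter_count_def by simp
  then show ?case by blast
qed

lemma infinite_mod_eq:
  assumes "t < (N::nat)"
  shows "infinite {v. v mod N = t}"
  unfolding infinite_nat_iff_unbounded_le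
proof
  fix M
  have "1 \<le> N" using assms by simp
  then have "1 * M \<le> N * M" by (rule mult_le_mono1)
  then have "M \<le> t + N * M" unfolding mult_1 by (rule trans_le_add2)
  moreover have "(t + N * M) mod N = t" unfolding mod_mult_self2 using assms by (rule mod_less)
  ultimately show "\<exists>v\<ge>M. v \<in> {v. v mod N = t}" by blast
qed

lemma infinite_letter_count_mod:
  assumes "infinite {j. w j = a}" "t < N"
  shows "infinite {i. letter_count a w i mod N = t}"
proof
  assume fin: "finite {i. letter_count a w i mod N = t}"
  have "{v. v mod N = t} \<subseteq> letter_count a w ` {i. letter_count a w i mod N = t}"
  proof
    fix v assume v: "v \<in> {v. v mod N = t}"
    obtain i where "letter_count a w i = v" using letter_count_surj[OF assms(1)] by blast
    with v show "v \<in> letter_count a w ` {i. letter_count a w i mod N = t}" by auto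
  qed
  then have "finite {v. v mod N = t}" by (rule finite_surj[OF fin])
  then show False using infinite_mod_eq[OF assms(2)] by contradiction
qed

definition count_mod_lang :: "'a set \<Rightarrow> 'a \<Rightarrow> nat \<Rightarrow> nat \<Rightarrow> (nat \<Rightarrow> 'a) set" where
  "count_mod_lang \<Sigma> a N t = {w \<in> omega_words \<Sigma>. infinite {i. letter_count a w i mod N = t}}"

lemma count_mod_lang_in_QBA_class:
  assumes \<Sigma>: "finite \<Sigma>" and t: "t < N" and lam: "0 \<le> lam" "lam < 1"
  shows "count_mod_lang \<Sigma> a N t \<in> QBA_class \<Sigma> lam"
proof -
  define p where "p = (\<lambda>\<sigma> i. if \<sigma> = a then Suc i mod N else i)"
  have state: "perm_state p 0 w i = letter_count a w i mod N" for w i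
    by (induction i) (auto simp: p_def letter_count_Suc mod_Suc_eq)
  have Suc_mod: "Suc i mod N = (if Suc i = N then 0 else Suc i)" if "i < N" for i
    using that by (cases "Suc i = N") simp_all
  have "\<forall>\<sigma>\<in>\<Sigma>. \<forall>j<N. p \<sigma> j < N" using t unfolding p_def by simp
  moreover have "\<forall>\<sigma>\<in>\<Sigma>. inj_on (p \<sigma>) {..<N}"
    unfolding p_def inj_on_def using Suc_mod by (metis Suc_inject lessThan_iff nat.distinct(1))
  ultimately have "{w \<in> omega_words \<Sigma>. infinite {k. perm_state p 0 w k = t}} \<in> QBA_class \<Sigma> lam"
    using t by (intro perm_automaton_lang_in_QBA_class[OF \<Sigma> _ t _ _ lam]) auto
  then show ?thesis unfolding count_mod_lang_def state .
qed

section \<open>Non-closure properties\<close>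

lemma set_lim_isI:
  assumes "\<And>x. x \<in> X \<Longrightarrow> eventually (\<lambda>k. x \<in> L k) sequentially"
    and "\<And>x. x \<notin> X \<Longrightarrow> eventually (\<lambda>k. x \<notin> L k) sequentially"
  shows "set_lim_is L X"
proof -
  have liminf: "x \<in> set_liminf L \<longleftrightarrow> eventually (\<lambda>k. x \<in> L k) sequentially" for x
    unfolding set_liminf_def eventually_sequentially by auto
  have limsup: "x \<in> set_limsup L \<longleftrightarrow> frequently (\<lambda>k. x \<in> L k) sequentially" for x
    unfolding set_limsup_def frequently_sequentially by auto
  have "(x \<in> set_liminf L \<longleftrightarrow> x \<in> X) \<and> (x \<in> set_limsup L \<longleftrightarrow> x \<in> X)" for x
  proof (cases "x \<in> X")
    case True
    then have "eventually (\<lambda>k. x \<in> L k) sequentially" by (rule assms(1))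
    then show ?thesis unfolding liminf limsup using True by (simp add: eventually_frequently)
  next
    case False
    then have "\<not> frequently (\<lambda>k. x \<in> L k) sequentially"
      using assms(2) by (simp add: not_frequently)
    then show ?thesis unfolding liminf limsup using False eventually_frequently[of sequentially] by auto
  qed
  then show ?thesis unfolding set_lim_is_def by blast
qed

lemma set_lim_is_count_mod_lang:
  "set_lim_is (\<lambda>k. count_mod_lang \<Sigma> a (Suc k) k) {w \<in> omega_words \<Sigma>. infinite {j. w j = a}}"
proof (rule set_lim_isI)
  fix w assume "w \<in> {w \<in> omega_words \<Sigma>. infinite {j. w j = a}}"
  then show "eventually (\<lambda>k. w \<in> count_mod_lang \<Sigma> a (Suc k) k) sequentially"
    unfolding count_mod_lang_def by (intro always_eventually allI) (simp add: infinite_letter_count_mod)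
next
  fix w assume w: "w \<notin> {w \<in> omega_words \<Sigma>. infinite {j. w j = a}}"
  have "w \<notin> count_mod_lang \<Sigma> a (Suc k) k" if "k > card {j. w j = a}" for k
  proof
    assume L: "w \<in> count_mod_lang \<Sigma> a (Suc k) k"
    then have "finite {j. w j = a}" using w unfolding count_mod_lang_def by auto
    then have "letter_count a w i mod Suc k \<noteq> k" for i
      using letter_count_le_card[of w a i] that by simp
    then show False using L unfolding count_mod_lang_def by simp
  qed
  then show "eventually (\<lambda>k. w \<notin> count_mod_lang \<Sigma> a (Suc k) k) sequentially"
    unfolding eventually_sequentially by (meson Suc_le_lessD)
qed

lemma infinitely_many_letter_notin_QBA_class:
  assumes a: "a \<in> \<Sigma>" and b: "b \<in> \<Sigma>" "a \<noteq> b" and lam: "0 \<le> lam"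
  shows "{w \<in> omega_words \<Sigma>. infinite {j. w j = a}} \<notin> QBA_class \<Sigma> lam"
proof
  assume "{w \<in> omega_words \<Sigma>. infinite {j. w j = a}} \<in> QBA_class \<Sigma> lam"
  moreover have "(\<lambda>_. a) \<in> {w \<in> omega_words \<Sigma>. infinite {j. w j = a}}"
    using a unfolding omega_words_def by simp
  ultimately obtain k0 where "(\<lambda>i. if i < k0 then a else b) \<in> {w \<in> omega_words \<Sigma>. infinite {j. w j = a}}"
    using QBA_class_prefix_const_suffix[OF _ lam _ b(1)] by blast
  moreover have "{j. (if j < k0 then a else b) = a} = {..<k0}" using b(2) by auto
  ultimately show False by simp
qed

lemma complement_count_mod_lang_notin_QBA_class:
  assumes a: "a \<in> \<Sigma>" and b: "b \<in> \<Sigma>" "a \<noteq> b" and lam: "0 \<le> lam"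
  shows "omega_words \<Sigma> - count_mod_lang \<Sigma> b 2 1 \<notin> QBA_class \<Sigma> lam"
proof
  assume "omega_words \<Sigma> - count_mod_lang \<Sigma> b 2 1 \<in> QBA_class \<Sigma> lam"
  moreover have "(\<lambda>_. a) \<in> omega_words \<Sigma> - count_mod_lang \<Sigma> b 2 1"
    using a b(2) unfolding omega_words_def count_mod_lang_def by (simp add: letter_count_const)
  ultimately obtain k0 where u: "(\<lambda>i. if i < k0 then a else b) \<in> omega_words \<Sigma> - count_mod_lang \<Sigma> b 2 1"
    using QBA_class_prefix_const_suffix[OF _ lam _ b(1)] by blast
  have "\<exists>i\<ge>M. (i - k0) mod 2 = 1" for M
  proof (intro exI conjI)
    show "M \<le> k0 + (2 * M + 1)" by simp
    show "(k0 + (2 * M + 1) - k0) mod 2 = 1" by simp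
  qed
  then have "infinite {i. letter_count b (\<lambda>i. if i < k0 then a else b) i mod 2 = 1}"
    unfolding letter_count_prefix_const[OF b(2)] infinite_nat_iff_unbounded_le by simp
  then show False using u unfolding count_mod_lang_def by simp
qed

lemma count_mod_lang_Int_notin_QBA_class:
  assumes a: "a \<in> \<Sigma>" and b: "b \<in> \<Sigma>" "a \<noteq> b" and lam: "0 \<le> lam"
  shows "count_mod_lang \<Sigma> a 2 0 \<inter> count_mod_lang \<Sigma> a 2 1 \<notin> QBA_class \<Sigma> lam"
proof
  assume "count_mod_lang \<Sigma> a 2 0 \<inter> count_mod_lang \<Sigma> a 2 1 \<in> QBA_class \<Sigma> lam"
  moreover have "(\<lambda>_. a) \<in> count_mod_lang \<Sigma> a 2 0 \<inter> count_mod_lang \<Sigma> a 2 1"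
    using a infinite_mod_eq[of 0 2] infinite_mod_eq[of 1 2]
    unfolding omega_words_def count_mod_lang_def by (simp add: letter_count_const)
  ultimately obtain k0
    where u: "(\<lambda>i. if i < k0 then a else b) \<in> count_mod_lang \<Sigma> a 2 0 \<inter> count_mod_lang \<Sigma> a 2 1"
    using QBA_class_prefix_const_suffix[OF _ lam _ b(1)] by blast
  define t where "t = 1 - k0 mod 2"
  have ne: "k0 mod 2 \<noteq> t" unfolding t_def by presburger
  have "{i. min i k0 mod 2 = t} \<subseteq> {..<k0}"
  proof
    fix i assume i: "i \<in> {i. min i k0 mod 2 = t}"
    show "i \<in> {..<k0}"
    proof (rule ccontr)
      assume "i \<notin> {..<k0}"
      then have "min i k0 = k0" by simp
      then show False using i ne by simp
    qed
  qed
  then have "finite {i. letter_count a (\<lambda>i. if i < k0 then a else b) i mod 2 = t}"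
    unfolding letter_count_prefix_const[OF b(2)] by (rule finite_subset) simp
  moreover have "t = 0 \<or> t = 1" unfolding t_def by presburger
  ultimately show False using u unfolding count_mod_lang_def by auto
qed

section \<open>Automata with a chosen orthonormal basis of the accepting subspace\<close>

record 'a basis_qa =
  qa_dim :: nat
  qa_init :: "complex vec"
  qa_trans :: "'a \<Rightarrow> complex mat"
  qa_basis :: "nat \<Rightarrow> complex vec"
  qa_rank :: nat

definition qa_wf :: "'a set \<Rightarrow> 'a basis_qa \<Rightarrow> bool" where
  "qa_wf \<Sigma> A \<longleftrightarrow>
     is_QA \<Sigma> (qa_dim A) (qa_init A) (qa_trans A) (basis_span (qa_dim A) (qa_basis A) (qa_rank A)) \<and>
     orthonormal (qa_dim A) (qa_basis A) (qa_rank A)"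

definition qa_lang :: "'a set \<Rightarrow> 'a basis_qa \<Rightarrow> real \<Rightarrow> (nat \<Rightarrow> 'a) set" where
  "qa_lang \<Sigma> A lam =
     QBA_lang \<Sigma> (qa_dim A) (qa_init A) (qa_trans A) (basis_span (qa_dim A) (qa_basis A) (qa_rank A)) lam"

definition qa_run :: "'a basis_qa \<Rightarrow> (nat \<Rightarrow> 'a) \<Rightarrow> nat \<Rightarrow> complex vec" where
  "qa_run A = nd_run (qa_init A) (qa_trans A)"

definition qa_weight :: "'a basis_qa \<Rightarrow> (nat \<Rightarrow> 'a) \<Rightarrow> nat \<Rightarrow> real" where
  "qa_weight A w = (\<lambda>k. proj_norm2 (qa_basis A) (qa_rank A) (qa_run A w k))"

lemma qa_wfD:
  assumes "qa_wf \<Sigma> A"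
  shows "finite \<Sigma>" "qa_init A \<in> carrier_vec (qa_dim A)" "cinner (qa_init A) (qa_init A) = 1"
    "\<And>\<sigma>. \<sigma> \<in> \<Sigma> \<Longrightarrow> unitary_n (qa_dim A) (qa_trans A \<sigma>)"
    "orthonormal (qa_dim A) (qa_basis A) (qa_rank A)"
  using assms unfolding qa_wf_def is_QA_def unit_vec_n_def by auto

lemma qa_wfI:
  assumes "finite \<Sigma>" "qa_init A \<in> carrier_vec (qa_dim A)" "cinner (qa_init A) (qa_init A) = 1"
    "\<And>\<sigma>. \<sigma> \<in> \<Sigma> \<Longrightarrow> unitary_n (qa_dim A) (qa_trans A \<sigma>)"
    "orthonormal (qa_dim A) (qa_basis A) (qa_rank A)"
  shows "qa_wf \<Sigma> A"
  using assms basis_span_subspace[OF assms(5)] unfolding qa_wf_def is_QA_def unit_vec_n_def by auto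

lemma qa_run_carrier: "qa_wf \<Sigma> A \<Longrightarrow> w \<in> omega_words \<Sigma> \<Longrightarrow> qa_run A w k \<in> carrier_vec (qa_dim A)"
  unfolding qa_wf_def qa_run_def by (blast intro: nd_run_carrier)

lemma qa_run_Suc: "qa_run A w (Suc k) = qa_trans A (w k) *\<^sub>v qa_run A w k"
  unfolding qa_run_def by simp

lemma qa_weight_bounds:
  assumes A: "qa_wf \<Sigma> A" and w: "w \<in> omega_words \<Sigma>"
  shows "0 \<le> qa_weight A w k" "qa_weight A w k \<le> 1"
proof -
  have "qa_weight A w k \<le> (vnorm (qa_run A w k))\<^sup>2"
    unfolding qa_weight_def using qa_wfD(5)[OF A] qa_run_carrier[OF A w] by (rule bessel_inequality)
  moreover have "vnorm (qa_run A w k) = 1"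
    using A w unfolding qa_wf_def qa_run_def by (blast intro: vnorm_nd_run)
  ultimately show "0 \<le> qa_weight A w k" "qa_weight A w k \<le> 1"
    by (simp_all add: qa_weight_def proj_norm2_nonneg)
qed

lemma qa_lang_eq:
  assumes "qa_wf \<Sigma> A" "0 \<le> lam"
  shows "qa_lang \<Sigma> A lam = {w \<in> omega_words \<Sigma>. frequently_above (qa_weight A w) lam}"
  using assms unfolding qa_wf_def qa_lang_def qa_weight_def qa_run_def
  by (simp add: QBA_lang_basis_span)

lemma qa_lang_in_QBA_class: "qa_wf \<Sigma> A \<Longrightarrow> qa_lang \<Sigma> A lam \<in> QBA_class \<Sigma> lam"
  unfolding qa_wf_def qa_lang_def QBA_class_def by blast

lemma QBA_class_obtain_qa:
  assumes "L \<in> QBA_class \<Sigma> lam"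
  obtains A where "qa_wf \<Sigma> A" "L = qa_lang \<Sigma> A lam"
proof -
  obtain n s0 U b m where "is_QA \<Sigma> n s0 U (basis_span n b m)" "orthonormal n b m"
    "L = QBA_lang \<Sigma> n s0 U (basis_span n b m) lam"
    using QBA_class_obtain_basis[OF assms] by blast
  then show ?thesis
    using that[of "\<lparr>qa_dim = n, qa_init = s0, qa_trans = U, qa_basis = b, qa_rank = m\<rparr>"]
    unfolding qa_wf_def qa_lang_def by simp
qed

lemma sum_lessThan_add_split: "(\<Sum>k<a + (b::nat). f k) = (\<Sum>k<a. f k) + (\<Sum>k<b. f (a + k))"
  by (induction b) (simp_all add: ac_simps)

lemma index_mult_mat_vec_lessThan:
  assumes "i < dim_row M" "dim_vec v = dim_col M"
  shows "(M *\<^sub>v v) $ i = (\<Sum>k<dim_col M. M $$ (i,k) * v $ k)"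
  using assms by (auto simp: scalar_prod_def atLeast0LessThan intro!: sum.cong)

definition dsum_vec :: "nat \<Rightarrow> nat \<Rightarrow> complex vec \<Rightarrow> complex vec \<Rightarrow> complex vec" where
  "dsum_vec n1 n2 x y = vec (n1 + n2) (\<lambda>i. if i < n1 then x $ i else y $ (i - n1))"

definition dsum_mat :: "nat \<Rightarrow> nat \<Rightarrow> complex mat \<Rightarrow> complex mat \<Rightarrow> complex mat" where
  "dsum_mat n1 n2 A B = mat (n1 + n2) (n1 + n2) (\<lambda>(i,j).
     if i < n1 \<and> j < n1 then A $$ (i,j) else if n1 \<le> i \<and> n1 \<le> j then B $$ (i - n1, j - n1) else 0)"

lemma dsum_vec_carrier [simp]: "dsum_vec n1 n2 x y \<in> carrier_vec (n1 + n2)"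
  and dim_dsum_vec [simp]: "dim_vec (dsum_vec n1 n2 x y) = n1 + n2"
  unfolding dsum_vec_def by simp_all

lemma dsum_mat_mult_dsum_vec:
  assumes A: "A \<in> carrier_mat n1 n1" and B: "B \<in> carrier_mat n2 n2"
    and x: "x \<in> carrier_vec n1" and y: "y \<in> carrier_vec n2"
  shows "dsum_mat n1 n2 A B *\<^sub>v dsum_vec n1 n2 x y = dsum_vec n1 n2 (A *\<^sub>v x) (B *\<^sub>v y)"
proof (rule eq_vecI)
  fix i assume "i < dim_vec (dsum_vec n1 n2 (A *\<^sub>v x) (B *\<^sub>v y))"
  then have i: "i < n1 + n2" by simp
  let ?M = "dsum_mat n1 n2 A B" and ?v = "dsum_vec n1 n2 x y"
  have "(?M *\<^sub>v ?v) $ i = (\<Sum>k<n1. ?M $$ (i,k) * ?v $ k) + (\<Sum>k<n2. ?M $$ (i,n1+k) * ?v $ (n1+k))"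
    using i by (subst index_mult_mat_vec_lessThan) (auto simp: dsum_mat_def sum_lessThan_add_split)
  also have "\<dots> = dsum_vec n1 n2 (A *\<^sub>v x) (B *\<^sub>v y) $ i"
  proof (cases "i < n1")
    case True
    have "(\<Sum>k<n1. ?M $$ (i,k) * ?v $ k) = (A *\<^sub>v x) $ i"
      using True i A x by (subst index_mult_mat_vec_lessThan)
        (auto simp: dsum_mat_def dsum_vec_def intro!: sum.cong)
    moreover have "(\<Sum>k<n2. ?M $$ (i,n1+k) * ?v $ (n1+k)) = 0"
      using True i by (auto simp: dsum_mat_def dsum_vec_def intro!: sum.neutral)
    ultimately show ?thesis using True i by (simp add: dsum_vec_def)
  next
    case False
    have "(\<Sum>k<n1. ?M $$ (i,k) * ?v $ k) = 0"
      using False i by (auto simp: dsum_mat_def dsum_vec_def intro!: sum.neutral)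
    moreover have "(\<Sum>k<n2. ?M $$ (i,n1+k) * ?v $ (n1+k)) = (B *\<^sub>v y) $ (i - n1)"
      using False i B y by (subst index_mult_mat_vec_lessThan)
        (auto simp: dsum_mat_def dsum_vec_def intro!: sum.cong)
    ultimately show ?thesis using False i by (simp add: dsum_vec_def)
  qed
  finally show "(?M *\<^sub>v ?v) $ i = dsum_vec n1 n2 (A *\<^sub>v x) (B *\<^sub>v y) $ i" .
qed (simp add: dsum_mat_def)

lemma dsum_mat_unitary:
  assumes A: "unitary_n n1 A" and B: "unitary_n n2 B"
  shows "unitary_n (n1 + n2) (dsum_mat n1 n2 A B)"
  unfolding unitary_n_iff_columns
proof (intro conjI allI impI)
  show "dsum_mat n1 n2 A B \<in> carrier_mat (n1 + n2) (n1 + n2)" unfolding dsum_mat_def by simp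
  have colsA: "\<And>k l. k < n1 \<Longrightarrow> l < n1 \<Longrightarrow> (\<Sum>i<n1. cnj (A $$ (i,k)) * A $$ (i,l)) = (if k = l then 1 else 0)"
    and colsB: "\<And>k l. k < n2 \<Longrightarrow> l < n2 \<Longrightarrow> (\<Sum>i<n2. cnj (B $$ (i,k)) * B $$ (i,l)) = (if k = l then 1 else 0)"
    using A B unfolding unitary_n_iff_columns by auto
  fix k l assume k: "k < n1 + n2" and l: "l < n1 + n2"
  let ?M = "dsum_mat n1 n2 A B"
  have "(\<Sum>i<n1+n2. cnj (?M $$ (i,k)) * ?M $$ (i,l)) =
      (\<Sum>i<n1. cnj (?M $$ (i,k)) * ?M $$ (i,l)) + (\<Sum>i<n2. cnj (?M $$ (n1+i,k)) * ?M $$ (n1+i,l))"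
    by (rule sum_lessThan_add_split)
  also have "\<dots> = (if k = l then 1 else 0)"
  proof (cases "k < n1"; cases "l < n1")
    assume kl: "k < n1" "l < n1"
    have "(\<Sum>i<n1. cnj (?M $$ (i,k)) * ?M $$ (i,l)) = (\<Sum>i<n1. cnj (A $$ (i,k)) * A $$ (i,l))"
      using kl by (auto simp: dsum_mat_def intro!: sum.cong)
    then show ?thesis using kl colsA[OF kl] by (simp add: dsum_mat_def)
  next
    assume kl: "\<not> k < n1" "\<not> l < n1"
    have "(\<Sum>i<n2. cnj (?M $$ (n1+i,k)) * ?M $$ (n1+i,l)) = (\<Sum>i<n2. cnj (B $$ (i,k-n1)) * B $$ (i,l-n1))"
      using kl k l by (auto simp: dsum_mat_def intro!: sum.cong)
    also have "\<dots> = (if k = l then 1 else 0)" using kl k l colsB[of "k - n1" "l - n1"] by auto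
    moreover have "(\<Sum>i<n1. cnj (?M $$ (i,k)) * ?M $$ (i,l)) = 0"
      using kl k l by (auto simp: dsum_mat_def intro!: sum.neutral)
    ultimately show ?thesis by simp
  qed (use k l in \<open>auto simp: dsum_mat_def intro!: sum.neutral\<close>)
  finally show "(\<Sum>i<n1+n2. cnj (?M $$ (i,k)) * ?M $$ (i,l)) = (if k = l then 1 else 0)" .
qed

lemma cinner_dsum_vec:
  assumes "dim_vec x' = n1" "dim_vec y' = n2"
  shows "cinner (dsum_vec n1 n2 x y) (dsum_vec n1 n2 x' y') = cinner x x' + cinner y y'"
  using assms unfolding cinner_def dim_dsum_vec sum_lessThan_add_split
  by (auto simp: dsum_vec_def intro!: arg_cong2[where f="(+)"] sum.cong)

definition dsum_basis ::
  "nat \<Rightarrow> nat \<Rightarrow> nat \<Rightarrow> (nat \<Rightarrow> complex vec) \<Rightarrow> (nat \<Rightarrow> complex vec) \<Rightarrow> nat \<Rightarrow> complex vec" where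
  "dsum_basis n1 n2 m1 b1 b2 j =
     (if j < m1 then dsum_vec n1 n2 (b1 j) (0\<^sub>v n2) else dsum_vec n1 n2 (0\<^sub>v n1) (b2 (j - m1)))"

lemma orthonormal_dsum_basis:
  assumes b1: "orthonormal n1 b1 m1" and b2: "orthonormal n2 b2 m2"
  shows "orthonormal (n1 + n2) (dsum_basis n1 n2 m1 b1 b2) (m1 + m2)"
  unfolding orthonormal_def
proof (intro conjI allI impI)
  fix j show "dsum_basis n1 n2 m1 b1 b2 j \<in> carrier_vec (n1 + n2)" unfolding dsum_basis_def by simp
next
  fix j k assume j: "j < m1 + m2" and k: "k < m1 + m2"
  have c1: "\<And>j. j < m1 \<Longrightarrow> dim_vec (b1 j) = n1" and c2: "\<And>j. j < m2 \<Longrightarrow> dim_vec (b2 j) = n2"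
    using orthonormal_carrier[OF b1] orthonormal_carrier[OF b2] by auto
  have o1: "\<And>j k. j < m1 \<Longrightarrow> k < m1 \<Longrightarrow> cinner (b1 j) (b1 k) = (if j = k then 1 else 0)"
    and o2: "\<And>j k. j < m2 \<Longrightarrow> k < m2 \<Longrightarrow> cinner (b2 j) (b2 k) = (if j = k then 1 else 0)"
    using b1 b2 unfolding orthonormal_def by auto
  show "cinner (dsum_basis n1 n2 m1 b1 b2 j) (dsum_basis n1 n2 m1 b1 b2 k) = (if j = k then 1 else 0)"
  proof (cases "j < m1"; cases "k < m1")
    assume "\<not> j < m1" "\<not> k < m1"
    then show ?thesis using j k c2 o2[of "j - m1" "k - m1"]
      by (auto simp: dsum_basis_def cinner_dsum_vec cinner_zero_left)
  qed (use j k c1 c2 o1 in \<open>auto simp: dsum_basis_def cinner_dsum_vec cinner_zero_left cinner_zero_right\<close>)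
qed

lemma proj_norm2_dsum:
  assumes "dim_vec x = n1" "dim_vec y = n2"
    and b1: "orthonormal n1 b1 m1" and b2: "orthonormal n2 b2 m2"
  shows "proj_norm2 (dsum_basis n1 n2 m1 b1 b2) (m1 + m2) (dsum_vec n1 n2 x y) =
    proj_norm2 b1 m1 x + proj_norm2 b2 m2 y"
  unfolding proj_norm2_def sum_lessThan_add_split
  using assms orthonormal_carrier[OF b1] orthonormal_carrier[OF b2]
  by (intro arg_cong2[where f="(+)"] sum.cong) (auto simp: dsum_basis_def cinner_dsum_vec cinner_zero_left)

definition qa_dsum :: "real \<Rightarrow> real \<Rightarrow> 'a basis_qa \<Rightarrow> 'a basis_qa \<Rightarrow> 'a basis_qa" where
  "qa_dsum \<alpha> \<beta> A B =
    \<lparr>qa_dim = qa_dim A + qa_dim B,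
     qa_init = dsum_vec (qa_dim A) (qa_dim B) (complex_of_real \<alpha> \<cdot>\<^sub>v qa_init A) (complex_of_real \<beta> \<cdot>\<^sub>v qa_init B),
     qa_trans = (\<lambda>\<sigma>. dsum_mat (qa_dim A) (qa_dim B) (qa_trans A \<sigma>) (qa_trans B \<sigma>)),
     qa_basis = dsum_basis (qa_dim A) (qa_dim B) (qa_rank A) (qa_basis A) (qa_basis B),
     qa_rank = qa_rank A + qa_rank B\<rparr>"

lemma qa_run_dsum:
  assumes A: "qa_wf \<Sigma> A" and B: "qa_wf \<Sigma> B" and w: "w \<in> omega_words \<Sigma>"
  shows "qa_run (qa_dsum \<alpha> \<beta> A B) w k = dsum_vec (qa_dim A) (qa_dim B)
    (complex_of_real \<alpha> \<cdot>\<^sub>v qa_run A w k) (complex_of_real \<beta> \<cdot>\<^sub>v qa_run B w k)"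
proof (induction k)
  case 0
  then show ?case by (simp add: qa_run_def qa_dsum_def)
next
  case (Suc k)
  have "w k \<in> \<Sigma>" using w unfolding omega_words_def by auto
  then have "qa_trans A (w k) \<in> carrier_mat (qa_dim A) (qa_dim A)"
    "qa_trans B (w k) \<in> carrier_mat (qa_dim B) (qa_dim B)"
    using qa_wfD(4)[OF A] qa_wfD(4)[OF B] unfolding unitary_n_def by auto
  then show ?case
    using Suc qa_run_carrier[OF A w, of k] qa_run_carrier[OF B w, of k]
    by (simp add: qa_run_Suc qa_dsum_def dsum_mat_mult_dsum_vec mult_mat_vec)
qed

lemma qa_wf_dsum:
  assumes A: "qa_wf \<Sigma> A" and B: "qa_wf \<Sigma> B" and \<alpha>\<beta>: "\<alpha>\<^sup>2 + \<beta>\<^sup>2 = 1"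
  shows "qa_wf \<Sigma> (qa_dsum \<alpha> \<beta> A B)"
proof (rule qa_wfI)
  have "cinner (qa_init (qa_dsum \<alpha> \<beta> A B)) (qa_init (qa_dsum \<alpha> \<beta> A B)) =
      complex_of_real (\<alpha>\<^sup>2) * cinner (qa_init A) (qa_init A) +
      complex_of_real (\<beta>\<^sup>2) * cinner (qa_init B) (qa_init B)"
    using qa_wfD(2)[OF A] qa_wfD(2)[OF B]
    by (simp add: qa_dsum_def cinner_dsum_vec cinner_smult_left cinner_smult_right power2_eq_square)
  also have "\<dots> = 1" using qa_wfD(3)[OF A] qa_wfD(3)[OF B] \<alpha>\<beta>
    by (metis mult.right_neutral of_real_1 of_real_add)
  finally show "cinner (qa_init (qa_dsum \<alpha> \<beta> A B)) (qa_init (qa_dsum \<alpha> \<beta> A B)) = 1" .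
qed (use qa_wfD[OF A] qa_wfD[OF B] in
      \<open>auto simp: qa_dsum_def intro: dsum_mat_unitary orthonormal_dsum_basis\<close>)

lemma qa_weight_dsum:
  assumes A: "qa_wf \<Sigma> A" and B: "qa_wf \<Sigma> B" and w: "w \<in> omega_words \<Sigma>"
  shows "qa_weight (qa_dsum \<alpha> \<beta> A B) w k = \<alpha>\<^sup>2 * qa_weight A w k + \<beta>\<^sup>2 * qa_weight B w k"
proof -
  have proj_norm2_smult: "proj_norm2 b m (complex_of_real c \<cdot>\<^sub>v v) = c\<^sup>2 * proj_norm2 b m v" for b m c v
    unfolding proj_norm2_def
    by (simp add: cinner_smult_right norm_mult power_mult_distrib sum_distrib_left)
  show ?thesis
    unfolding qa_weight_def qa_run_dsum[OF A B w]
    using qa_run_carrier[OF A w, of k] qa_run_carrier[OF B w, of k] qa_wfD(5)[OF A] qa_wfD(5)[OF B]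
    by (simp add: qa_dsum_def proj_norm2_dsum proj_norm2_smult)
qed

lemma sum_lessThan_mult_split: "(\<Sum>i<(a::nat) * b. f i) = (\<Sum>x<a. \<Sum>y<b. f (x * b + y))"
proof (induction a)
  case (Suc a)
  have "(\<Sum>i<Suc a * b. f i) = (\<Sum>i<a * b + b. f i)" by (simp add: add.commute)
  then show ?case using Suc by (simp add: sum_lessThan_add_split)
qed simp

lemma mult_add_less_mult:
  assumes p: "p < n1" and q: "q < (n2::nat)"
  shows "p * n2 + q < n1 * n2"
proof -
  have "p * n2 + q < Suc p * n2" using q by simp
  also have "\<dots> \<le> n1 * n2" using p by (intro mult_right_mono) auto
  finally show ?thesis .
qed

lemma div_mod_less_mult:
  assumes "i < n1 * (n2::nat)"
  shows "i div n2 < n1" "i mod n2 < n2"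
proof -
  have "n2 > 0" using assms by (cases n2) auto
  then show "i mod n2 < n2" by simp
  show "i div n2 < n1" using assms by (simp add: less_mult_imp_div_less)
qed

definition kron_vec :: "nat \<Rightarrow> nat \<Rightarrow> complex vec \<Rightarrow> complex vec \<Rightarrow> complex vec" where
  "kron_vec n1 n2 x y = vec (n1 * n2) (\<lambda>i. x $ (i div n2) * y $ (i mod n2))"

definition kron_mat :: "nat \<Rightarrow> nat \<Rightarrow> complex mat \<Rightarrow> complex mat \<Rightarrow> complex mat" where
  "kron_mat n1 n2 A B =
     mat (n1 * n2) (n1 * n2) (\<lambda>(i,j). A $$ (i div n2, j div n2) * B $$ (i mod n2, j mod n2))"

lemma kron_vec_carrier [simp]: "kron_vec n1 n2 x y \<in> carrier_vec (n1 * n2)"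
  and dim_kron_vec [simp]: "dim_vec (kron_vec n1 n2 x y) = n1 * n2"
  unfolding kron_vec_def by simp_all

lemma kron_mat_mult_kron_vec:
  assumes A: "A \<in> carrier_mat n1 n1" and B: "B \<in> carrier_mat n2 n2"
    and x: "x \<in> carrier_vec n1" and y: "y \<in> carrier_vec n2"
  shows "kron_mat n1 n2 A B *\<^sub>v kron_vec n1 n2 x y = kron_vec n1 n2 (A *\<^sub>v x) (B *\<^sub>v y)"
proof (rule eq_vecI)
  fix i assume "i < dim_vec (kron_vec n1 n2 (A *\<^sub>v x) (B *\<^sub>v y))"
  then have i: "i < n1 * n2" by simp
  note ib = div_mod_less_mult[OF i]
  have "(kron_mat n1 n2 A B *\<^sub>v kron_vec n1 n2 x y) $ i =
      (\<Sum>j<n1*n2. kron_mat n1 n2 A B $$ (i, j) * kron_vec n1 n2 x y $ j)"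
    using i by (subst index_mult_mat_vec_lessThan) (auto simp: kron_mat_def)
  also have "\<dots> = (\<Sum>p<n1. \<Sum>q<n2. kron_mat n1 n2 A B $$ (i, p*n2+q) * kron_vec n1 n2 x y $ (p*n2+q))"
    by (rule sum_lessThan_mult_split)
  also have "\<dots> = (\<Sum>p<n1. \<Sum>q<n2. (A $$ (i div n2, p) * x $ p) * (B $$ (i mod n2, q) * y $ q))"
    using i by (intro sum.cong refl) (simp add: kron_mat_def kron_vec_def mult_add_less_mult)
  also have "\<dots> = (\<Sum>p<n1. A $$ (i div n2, p) * x $ p) * (\<Sum>q<n2. B $$ (i mod n2, q) * y $ q)"
    by (simp add: sum_product)
  also have "\<dots> = (A *\<^sub>v x) $ (i div n2) * (B *\<^sub>v y) $ (i mod n2)"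
  proof -
    have "(A *\<^sub>v x) $ (i div n2) = (\<Sum>p<n1. A $$ (i div n2, p) * x $ p)"
      using A x ib by (subst index_mult_mat_vec_lessThan) auto
    moreover have "(B *\<^sub>v y) $ (i mod n2) = (\<Sum>q<n2. B $$ (i mod n2, q) * y $ q)"
      using B y ib by (subst index_mult_mat_vec_lessThan) auto
    ultimately show ?thesis by simp
  qed
  finally show "(kron_mat n1 n2 A B *\<^sub>v kron_vec n1 n2 x y) $ i = kron_vec n1 n2 (A *\<^sub>v x) (B *\<^sub>v y) $ i"
    using i by (simp add: kron_vec_def)
qed (simp add: kron_mat_def)

lemma cinner_kron_vec:
  assumes "dim_vec x' = n1" "dim_vec y' = n2"
  shows "cinner (kron_vec n1 n2 x y) (kron_vec n1 n2 x' y') = cinner x x' * cinner y y'"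
proof -
  have "cinner (kron_vec n1 n2 x y) (kron_vec n1 n2 x' y') =
      (\<Sum>p<n1. \<Sum>q<n2. (cnj (x $ p) * x' $ p) * (cnj (y $ q) * y' $ q))"
    unfolding cinner_def dim_kron_vec sum_lessThan_mult_split
    by (intro sum.cong refl) (auto simp: kron_vec_def mult_add_less_mult)
  then show ?thesis unfolding cinner_def using assms by (simp add: sum_product)
qed

lemma delta_div_mod:
  "(if (j::nat) div m = k div m then 1 else 0) * (if j mod m = k mod m then 1 else 0) =
    (if j = k then 1 else (0::complex))"
  using div_mult_mod_eq[of j m] div_mult_mod_eq[of k m] by (auto, metis)

lemma kron_mat_unitary:
  assumes A: "unitary_n n1 A" and B: "unitary_n n2 B"
  shows "unitary_n (n1 * n2) (kron_mat n1 n2 A B)"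
  unfolding unitary_n_iff_columns
proof (intro conjI allI impI)
  show "kron_mat n1 n2 A B \<in> carrier_mat (n1 * n2) (n1 * n2)" unfolding kron_mat_def by simp
  fix k l assume k: "k < n1 * n2" and l: "l < n1 * n2"
  note kb = div_mod_less_mult[OF k] and lb = div_mod_less_mult[OF l]
  let ?K = "kron_mat n1 n2 A B"
  have "(\<Sum>i<n1*n2. cnj (?K $$ (i,k)) * ?K $$ (i,l)) =
      (\<Sum>p<n1. \<Sum>q<n2. (cnj (A $$ (p, k div n2)) * A $$ (p, l div n2)) *
        (cnj (B $$ (q, k mod n2)) * B $$ (q, l mod n2)))"
    unfolding sum_lessThan_mult_split using k l
    by (intro sum.cong refl) (simp add: kron_mat_def mult_add_less_mult)
  also have "\<dots> = (\<Sum>p<n1. cnj (A $$ (p, k div n2)) * A $$ (p, l div n2)) *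
        (\<Sum>q<n2. cnj (B $$ (q, k mod n2)) * B $$ (q, l mod n2))"
    by (simp add: sum_product)
  also have "\<dots> = (if k = l then 1 else 0)"
    using A B kb lb unfolding unitary_n_iff_columns by (simp add: delta_div_mod)
  finally show "(\<Sum>i<n1*n2. cnj (?K $$ (i,k)) * ?K $$ (i,l)) = (if k = l then 1 else 0)" .
qed

definition kron_basis ::
  "nat \<Rightarrow> nat \<Rightarrow> nat \<Rightarrow> (nat \<Rightarrow> complex vec) \<Rightarrow> (nat \<Rightarrow> complex vec) \<Rightarrow> nat \<Rightarrow> complex vec" where
  "kron_basis n1 n2 m2 b1 b2 j = kron_vec n1 n2 (b1 (j div m2)) (b2 (j mod m2))"

lemma orthonormal_kron_basis:
  assumes b1: "orthonormal n1 b1 m1" and b2: "orthonormal n2 b2 m2"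
  shows "orthonormal (n1 * n2) (kron_basis n1 n2 m2 b1 b2) (m1 * m2)"
  unfolding orthonormal_def
proof (intro conjI allI impI)
  fix j show "kron_basis n1 n2 m2 b1 b2 j \<in> carrier_vec (n1 * n2)" unfolding kron_basis_def by simp
next
  fix j k assume j: "j < m1 * m2" and k: "k < m1 * m2"
  note jb = div_mod_less_mult[OF j] and kb = div_mod_less_mult[OF k]
  show "cinner (kron_basis n1 n2 m2 b1 b2 j) (kron_basis n1 n2 m2 b1 b2 k) = (if j = k then 1 else 0)"
    using b1 b2 jb kb orthonormal_carrier[OF b1 kb(1)] orthonormal_carrier[OF b2 kb(2)]
    unfolding kron_basis_def orthonormal_def by (simp add: cinner_kron_vec delta_div_mod)
qed

lemma proj_norm2_kron:
  assumes "dim_vec x = n1" "dim_vec y = n2"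
  shows "proj_norm2 (kron_basis n1 n2 m2 b1 b2) (m1 * m2) (kron_vec n1 n2 x y) =
    proj_norm2 b1 m1 x * proj_norm2 b2 m2 y"
  unfolding proj_norm2_def sum_lessThan_mult_split sum_product
  using assms by (intro sum.cong refl) (simp add: kron_basis_def cinner_kron_vec norm_mult power_mult_distrib)

definition qa_tensor :: "'a basis_qa \<Rightarrow> 'a basis_qa \<Rightarrow> 'a basis_qa" where
  "qa_tensor A B =
    \<lparr>qa_dim = qa_dim A * qa_dim B,
     qa_init = kron_vec (qa_dim A) (qa_dim B) (qa_init A) (qa_init B),
     qa_trans = (\<lambda>\<sigma>. kron_mat (qa_dim A) (qa_dim B) (qa_trans A \<sigma>) (qa_trans B \<sigma>)),
     qa_basis = kron_basis (qa_dim A) (qa_dim B) (qa_rank B) (qa_basis A) (qa_basis B),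
     qa_rank = qa_rank A * qa_rank B\<rparr>"

lemma qa_run_tensor:
  assumes A: "qa_wf \<Sigma> A" and B: "qa_wf \<Sigma> B" and w: "w \<in> omega_words \<Sigma>"
  shows "qa_run (qa_tensor A B) w k = kron_vec (qa_dim A) (qa_dim B) (qa_run A w k) (qa_run B w k)"
proof (induction k)
  case 0
  then show ?case by (simp add: qa_run_def qa_tensor_def)
next
  case (Suc k)
  have "w k \<in> \<Sigma>" using w unfolding omega_words_def by auto
  then have "qa_trans A (w k) \<in> carrier_mat (qa_dim A) (qa_dim A)"
    "qa_trans B (w k) \<in> carrier_mat (qa_dim B) (qa_dim B)"
    using qa_wfD(4)[OF A] qa_wfD(4)[OF B] unfolding unitary_n_def by auto
  then show ?case
    using Suc qa_run_carrier[OF A w, of k] qa_run_carrier[OF B w, of k]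
    by (simp add: qa_run_Suc qa_tensor_def kron_mat_mult_kron_vec)
qed

lemma qa_wf_tensor:
  assumes A: "qa_wf \<Sigma> A" and B: "qa_wf \<Sigma> B"
  shows "qa_wf \<Sigma> (qa_tensor A B)"
  using qa_wfD[OF A] qa_wfD[OF B]
  by (intro qa_wfI) (auto simp: qa_tensor_def cinner_kron_vec intro: kron_mat_unitary orthonormal_kron_basis)

lemma qa_weight_tensor:
  assumes A: "qa_wf \<Sigma> A" and B: "qa_wf \<Sigma> B" and w: "w \<in> omega_words \<Sigma>"
  shows "qa_weight (qa_tensor A B) w k = qa_weight A w k * qa_weight B w k"
  unfolding qa_weight_def qa_run_tensor[OF A B w]
  using qa_run_carrier[OF A w, of k] qa_run_carrier[OF B w, of k]
  by (simp add: qa_tensor_def proj_norm2_kron)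

definition qa_trivial :: "nat \<Rightarrow> 'a basis_qa" where
  "qa_trivial r = \<lparr>qa_dim = 1, qa_init = vec 1 (\<lambda>_. 1), qa_trans = (\<lambda>_. 1\<^sub>m 1),
     qa_basis = (\<lambda>_. vec 1 (\<lambda>_. 1)), qa_rank = r\<rparr>"

lemma qa_wf_trivial: "finite \<Sigma> \<Longrightarrow> r \<le> 1 \<Longrightarrow> qa_wf \<Sigma> (qa_trivial r)"
  unfolding qa_trivial_def
  by (intro qa_wfI) (auto simp: cinner_def unitary_n_iff_columns orthonormal_def)

lemma qa_weight_trivial: "r \<le> 1 \<Longrightarrow> qa_weight (qa_trivial r) w k = real r"
proof -
  have "qa_run (qa_trivial r) w k = vec 1 (\<lambda>_. 1)"
    by (induction k) (simp_all add: qa_run_def qa_trivial_def)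
  moreover assume "r \<le> 1"
  ultimately show ?thesis
    unfolding qa_weight_def by (cases r) (auto simp: qa_trivial_def proj_norm2_def cinner_def)
qed

definition qa_const :: "real \<Rightarrow> 'a basis_qa" where
  "qa_const x = qa_dsum (sqrt x) (sqrt (1 - x)) (qa_trivial 1) (qa_trivial 0)"

lemma qa_wf_const:
  assumes \<Sigma>: "finite \<Sigma>" and x: "0 \<le> x" "x \<le> 1"
  shows "qa_wf \<Sigma> (qa_const x)"
proof -
  have "(sqrt x)\<^sup>2 + (sqrt (1 - x))\<^sup>2 = 1" using x by simp
  then show ?thesis unfolding qa_const_def
    by (rule qa_wf_dsum[OF qa_wf_trivial[OF \<Sigma> order_refl] qa_wf_trivial[OF \<Sigma> le0]])
qed

lemma qa_weight_const:
  assumes \<Sigma>: "finite \<Sigma>" and x: "0 \<le> x" "x \<le> 1" and w: "w \<in> omega_words \<Sigma>"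
  shows "qa_weight (qa_const x) w k = x"
  unfolding qa_const_def qa_weight_dsum[OF qa_wf_trivial[OF \<Sigma> order_refl] qa_wf_trivial[OF \<Sigma> le0] w]
  using x by (simp add: qa_weight_trivial)

primrec qa_power :: "'a basis_qa \<Rightarrow> nat \<Rightarrow> 'a basis_qa" where
  "qa_power A 0 = qa_trivial 1"
| "qa_power A (Suc K) = qa_tensor A (qa_power A K)"

lemma qa_wf_power: "qa_wf \<Sigma> A \<Longrightarrow> qa_wf \<Sigma> (qa_power A K)"
  by (induction K) (simp_all add: qa_wf_trivial qa_wfD(1) qa_wf_tensor)

lemma qa_weight_power:
  "qa_wf \<Sigma> A \<Longrightarrow> w \<in> omega_words \<Sigma> \<Longrightarrow> qa_weight (qa_power A K) w k = (qa_weight A w k) ^ K"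
  by (induction K) (simp_all add: qa_weight_trivial qa_weight_tensor qa_wf_power)

section \<open>Unions\<close>

lemma frequently_above_0_midpoint_iff:
  assumes "\<And>k. 0 \<le> a k" "\<And>k. 0 \<le> b k"
  shows "frequently_above (\<lambda>k. a k / 2 + b k / 2) 0 \<longleftrightarrow> frequently_above a 0 \<or> frequently_above b 0"
proof
  assume "frequently_above (\<lambda>k. a k / 2 + b k / 2) 0"
  then obtain \<epsilon> where "0 < \<epsilon>" and inf: "infinite {k. a k / 2 + b k / 2 > \<epsilon>}"
    unfolding frequently_above_def by auto
  have "{k. a k / 2 + b k / 2 > \<epsilon>} \<subseteq> {k. a k > \<epsilon>} \<union> {k. b k > \<epsilon>}" by auto
  then have "infinite {k. a k > \<epsilon>} \<or> infinite {k. b k > \<epsilon>}" using inf finite_subset by blast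
  then show "frequently_above a 0 \<or> frequently_above b 0"
    unfolding frequently_above_def using \<open>0 < \<epsilon>\<close> by auto
next
  assume "frequently_above a 0 \<or> frequently_above b 0"
  then obtain \<epsilon> where "0 < \<epsilon>" and inf: "infinite {k. a k > \<epsilon>} \<or> infinite {k. b k > \<epsilon>}"
    unfolding frequently_above_def by auto
  have "a k / 2 + b k / 2 > \<epsilon> / 2" if "a k > \<epsilon> \<or> b k > \<epsilon>" for k
    using that assms(1)[of k] assms(2)[of k] by linarith
  then have "{k. a k > \<epsilon>} \<union> {k. b k > \<epsilon>} \<subseteq> {k. a k / 2 + b k / 2 > \<epsilon> / 2}" by auto
  then have "infinite {k. a k / 2 + b k / 2 > 0 + \<epsilon> / 2}" using inf finite_subset by auto
  then show "frequently_above (\<lambda>k. a k / 2 + b k / 2) 0"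
    unfolding frequently_above_def using \<open>0 < \<epsilon>\<close> half_gt_zero by blast
qed

theorem QBA_class_0_Un:
  assumes "L1 \<in> QBA_class \<Sigma> 0" "L2 \<in> QBA_class \<Sigma> 0"
  shows "L1 \<union> L2 \<in> QBA_class \<Sigma> 0"
proof -
  obtain A B where A: "qa_wf \<Sigma> A" "L1 = qa_lang \<Sigma> A 0" and B: "qa_wf \<Sigma> B" "L2 = qa_lang \<Sigma> B 0"
    using QBA_class_obtain_qa assms by metis
  define h where "h = sqrt (1 / 2 :: real)"
  have h: "h\<^sup>2 = 1 / 2" unfolding h_def by simp
  have C: "qa_wf \<Sigma> (qa_dsum h h A B)" using qa_wf_dsum[OF A(1) B(1)] h by simp
  have "qa_weight (qa_dsum h h A B) w = (\<lambda>k. qa_weight A w k / 2 + qa_weight B w k / 2)"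
    if "w \<in> omega_words \<Sigma>" for w
    by (intro ext) (simp add: qa_weight_dsum[OF A(1) B(1) that] h)
  then have "qa_lang \<Sigma> (qa_dsum h h A B) 0 = L1 \<union> L2"
    unfolding qa_lang_eq[OF C order_refl] A(2) B(2)
      qa_lang_eq[OF A(1) order_refl] qa_lang_eq[OF B(1) order_refl]
    using frequently_above_0_midpoint_iff qa_weight_bounds[OF A(1)] qa_weight_bounds[OF B(1)] by auto
  then show ?thesis using qa_lang_in_QBA_class[OF C] by metis
qed

lemma power_diff_le_mult_diff:
  fixes x y :: real
  assumes "0 \<le> y" "y \<le> x" "x \<le> 1"
  shows "x ^ K - y ^ K \<le> real K * (x - y)"
proof (induction K)
  case (Suc K)
  have "x ^ Suc K - y ^ Suc K = x * (x ^ K - y ^ K) + y ^ K * (x - y)" by (simp add: algebra_simps)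
  also have "x * (x ^ K - y ^ K) \<le> 1 * (real K * (x - y))"
    using Suc assms by (intro mult_mono) (auto simp: power_mono)
  also have "y ^ K * (x - y) \<le> 1 * (x - y)"
    using assms by (intro mult_right_mono) (auto simp: power_le_one)
  finally show ?case by (simp add: algebra_simps)
qed simp

text \<open>Weights of the automata approximating a union for \<open>\<lambda> > 0\<close>: once \<open>K\<close> is large, the average of
  \<open>a\<^sup>K\<close> and \<open>b\<^sup>K\<close> exceeds \<open>\<lambda>\<^sup>K\<close> by a margin infinitely often exactly when \<open>a\<close> or \<open>b\<close> exceeds \<open>\<lambda>\<close> by a
  margin infinitely often.\<close>

definition union_approx :: "real \<Rightarrow> nat \<Rightarrow> (nat \<Rightarrow> real) \<Rightarrow> (nat \<Rightarrow> real) \<Rightarrow> nat \<Rightarrow> real" where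
  "union_approx lam K a b k = lam + (1 - lam) * ((a k ^ K + b k ^ K) / 2 - lam ^ K)"

lemma union_approx_commute: "union_approx lam K a b = union_approx lam K b a"
  unfolding union_approx_def by (simp add: add.commute)

lemma frequently_above_union_approx_imp:
  assumes lam: "0 < lam" "lam < 1" and a: "\<And>k. 0 \<le> a k" and b: "\<And>k. 0 \<le> b k"
    and freq: "frequently_above (union_approx lam K a b) lam"
  shows "frequently_above a lam \<or> frequently_above b lam"
proof (rule ccontr)
  assume "\<not> (frequently_above a lam \<or> frequently_above b lam)"
  then have na: "\<And>\<eta>. 0 < \<eta> \<Longrightarrow> finite {k. a k > lam + \<eta>}"
    and nb: "\<And>\<eta>. 0 < \<eta> \<Longrightarrow> finite {k. b k > lam + \<eta>}"
    unfolding frequently_above_def by auto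
  obtain \<epsilon> where \<epsilon>: "0 < \<epsilon>" and inf: "infinite {k. union_approx lam K a b k > lam + \<epsilon>}"
    using freq unfolding frequently_above_def by auto
  define \<eta> where "\<eta> = min (1 - lam) (\<epsilon> / (real K + 1))"
  have \<eta>: "0 < \<eta>" "\<eta> \<le> 1 - lam" "real K * \<eta> \<le> \<epsilon>"
    unfolding \<eta>_def using lam \<epsilon> by (auto simp: min_def field_simps)
  have bound: "union_approx lam K a b k \<le> lam + \<epsilon>" if "a k \<le> lam + \<eta>" "b k \<le> lam + \<eta>" for k
  proof -
    have "a k ^ K \<le> (lam + \<eta>) ^ K" "b k ^ K \<le> (lam + \<eta>) ^ K"
      using that a[of k] b[of k] by (auto intro: power_mono)
    then have "a k ^ K + b k ^ K \<le> 2 * (lam + \<eta>) ^ K" by simp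
    then have "(a k ^ K + b k ^ K) / 2 - lam ^ K \<le> (lam + \<eta>) ^ K - lam ^ K" by simp
    also have "\<dots> \<le> real K * \<eta>" using power_diff_le_mult_diff[of lam "lam + \<eta>" K] lam \<eta> by simp
    finally have "(1 - lam) * ((a k ^ K + b k ^ K) / 2 - lam ^ K) \<le> (1 - lam) * (real K * \<eta>)"
      using lam by (intro mult_left_mono) auto
    also have "\<dots> \<le> real K * \<eta>" using lam \<eta> by (intro mult_left_le_one_le) auto
    finally show ?thesis unfolding union_approx_def using \<eta> by linarith
  qed
  have "{k. union_approx lam K a b k > lam + \<epsilon>} \<subseteq> {k. a k > lam + \<eta>} \<union> {k. b k > lam + \<eta>}"
  proof
    fix k assume "k \<in> {k. union_approx lam K a b k > lam + \<epsilon>}"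
    then show "k \<in> {k. a k > lam + \<eta>} \<union> {k. b k > lam + \<eta>}"
      using bound[of k] by (cases "a k \<le> lam + \<eta>"; cases "b k \<le> lam + \<eta>") auto
  qed
  then show False using inf na[OF \<eta>(1)] nb[OF \<eta>(1)] finite_subset by blast
qed

lemma eventually_frequently_above_union_approx:
  assumes lam: "0 < lam" "lam < 1" and b: "\<And>k. 0 \<le> b k" and freq: "frequently_above a lam"
  shows "eventually (\<lambda>K. frequently_above (union_approx lam K a b) lam) sequentially"
proof -
  obtain \<epsilon> where \<epsilon>: "0 < \<epsilon>" and inf: "infinite {k. a k > lam + \<epsilon>}"
    using freq unfolding frequently_above_def by auto
  define x where "x = (lam + \<epsilon>) / lam"
  have "1 < x" unfolding x_def using lam \<epsilon> by (simp add: field_simps)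
  then obtain K0 where K0: "2 < x ^ K0" using real_arch_pow by blast
  have "frequently_above (union_approx lam K a b) lam" if K: "K0 \<le> K" for K
  proof -
    have "x ^ K0 \<le> x ^ K" using \<open>1 < x\<close> K by (intro power_increasing) auto
    then have "2 < x ^ K" using K0 by linarith
    moreover have "x ^ K = (lam + \<epsilon>) ^ K / lam ^ K" unfolding x_def by (simp add: power_divide)
    ultimately have "2 * lam ^ K < (lam + \<epsilon>) ^ K" using lam by (simp add: field_simps)
    then have \<delta>: "0 < (1 - lam) * ((lam + \<epsilon>) ^ K / 2 - lam ^ K)" using lam(2) by simp
    have "lam + (1 - lam) * ((lam + \<epsilon>) ^ K / 2 - lam ^ K) \<le> union_approx lam K a b k"
      if "a k > lam + \<epsilon>" for k
    proof -
      have "(lam + \<epsilon>) ^ K \<le> a k ^ K" using that lam \<epsilon> by (intro power_mono) auto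
      moreover have "0 \<le> b k ^ K" using b[of k] by simp
      ultimately have "(lam + \<epsilon>) ^ K / 2 - lam ^ K \<le> (a k ^ K + b k ^ K) / 2 - lam ^ K"
        by (simp add: divide_right_mono)
      then show ?thesis unfolding union_approx_def using lam(2) by (simp add: mult_left_mono)
    qed
    then have "{k. a k > lam + \<epsilon>} \<subseteq>
        {k. union_approx lam K a b k > lam + (1 - lam) * ((lam + \<epsilon>) ^ K / 2 - lam ^ K) / 2}"
      using \<delta> by fastforce
    then have "infinite {k. union_approx lam K a b k > lam + (1 - lam) * ((lam + \<epsilon>) ^ K / 2 - lam ^ K) / 2}"
      using inf finite_subset by blast
    then show ?thesis unfolding frequently_above_def using \<delta> half_gt_zero by blast
  qed
  then show ?thesis unfolding eventually_sequentially by blast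
qed

lemma eventually_frequently_above_union_approx_disj:
  assumes lam: "0 < lam" "lam < 1" and a: "\<And>k. 0 \<le> a k" and b: "\<And>k. 0 \<le> b k"
    and freq: "frequently_above a lam \<or> frequently_above b lam"
  shows "eventually (\<lambda>K. frequently_above (union_approx lam K a b) lam) sequentially"
  using freq
proof
  assume "frequently_above a lam"
  then show ?thesis by (rule eventually_frequently_above_union_approx[OF lam b])
next
  assume "frequently_above b lam"
  then have "eventually (\<lambda>K. frequently_above (union_approx lam K b a) lam) sequentially"
    by (rule eventually_frequently_above_union_approx[OF lam a])
  then show ?thesis by (simp add: union_approx_commute[of lam _ b a])
qed

text \<open>The weights \<open>union_approx\<close> are realised by the direct sum of the averaged tensor powers,
  weighted by \<open>1 - \<lambda>\<close>, with a constant weight \<open>1 - (1 - \<lambda>) \<lambda>\<^sup>K\<close>, weighted by \<open>\<lambda>\<close>.\<close>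

lemma qa_union_approx:
  assumes A: "qa_wf \<Sigma> A" and B: "qa_wf \<Sigma> B" and lam: "0 < lam" "lam < 1"
  obtains C where "qa_wf \<Sigma> C"
    "\<And>w. w \<in> omega_words \<Sigma> \<Longrightarrow>
       qa_weight C w = union_approx lam (Suc K) (qa_weight A w) (qa_weight B w)"
proof -
  define h where "h = sqrt (1 / 2 :: real)"
  have h: "h\<^sup>2 = 1 / 2" "h\<^sup>2 + h\<^sup>2 = 1" unfolding h_def by simp_all
  define c where "c = 1 - (1 - lam) * lam ^ K"
  have "lam ^ K \<le> 1" using lam by (intro power_le_one) auto
  then have "(1 - lam) * lam ^ K \<le> 1" using lam by (intro mult_le_one) auto
  then have c: "0 \<le> c" "c \<le> 1" unfolding c_def using lam by auto
  have \<Sigma>: "finite \<Sigma>" by (rule qa_wfD(1)[OF A])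
  define D where "D = qa_dsum h h (qa_power A (Suc K)) (qa_power B (Suc K))"
  have D: "qa_wf \<Sigma> D" unfolding D_def using qa_wf_power[OF A] qa_wf_power[OF B] h(2) by (rule qa_wf_dsum)
  have sq: "(sqrt (1 - lam))\<^sup>2 + (sqrt lam)\<^sup>2 = 1" using lam by simp
  define C where "C = qa_dsum (sqrt (1 - lam)) (sqrt lam) D (qa_const c)"
  have "qa_wf \<Sigma> C" unfolding C_def using D qa_wf_const[OF \<Sigma> c] sq by (rule qa_wf_dsum)
  moreover have "qa_weight C w = union_approx lam (Suc K) (qa_weight A w) (qa_weight B w)"
    if w: "w \<in> omega_words \<Sigma>" for w
  proof
    fix k
    have "qa_weight C w k = (1 - lam) * qa_weight D w k + lam * c"
      unfolding C_def qa_weight_dsum[OF D qa_wf_const[OF \<Sigma> c] w] qa_weight_const[OF \<Sigma> c w]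
      using lam by simp
    also have "qa_weight D w k = (qa_weight A w k ^ Suc K + qa_weight B w k ^ Suc K) / 2"
      unfolding D_def qa_weight_dsum[OF qa_wf_power[OF A] qa_wf_power[OF B] w]
        qa_weight_power[OF A w] qa_weight_power[OF B w] h(1) by simp
    finally show "qa_weight C w k = union_approx lam (Suc K) (qa_weight A w) (qa_weight B w) k"
      unfolding union_approx_def c_def by (simp add: algebra_simps)
  qed
  ultimately show ?thesis using that by blast
qed

lemma set_lim_is_union_approx:
  assumes lam: "0 < lam" "lam < 1" and A: "qa_wf \<Sigma> A" and B: "qa_wf \<Sigma> B" and C: "\<And>k. qa_wf \<Sigma> (C k)"
    and weight: "\<And>k w. w \<in> omega_words \<Sigma> \<Longrightarrow>
      qa_weight (C k) w = union_approx lam (Suc k) (qa_weight A w) (qa_weight B w)"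
  shows "set_lim_is (\<lambda>k. qa_lang \<Sigma> (C k) lam) (qa_lang \<Sigma> A lam \<union> qa_lang \<Sigma> B lam)"
proof (rule set_lim_isI)
  let ?a = "qa_weight A" and ?b = "qa_weight B"
  have lam0: "0 \<le> lam" using lam by simp
  have L: "w \<in> qa_lang \<Sigma> (C k) lam \<longleftrightarrow>
      w \<in> omega_words \<Sigma> \<and> frequently_above (union_approx lam (Suc k) (?a w) (?b w)) lam" for k w
    unfolding qa_lang_eq[OF C lam0] using weight by auto
  have L12: "w \<in> qa_lang \<Sigma> A lam \<union> qa_lang \<Sigma> B lam \<longleftrightarrow>
      w \<in> omega_words \<Sigma> \<and> (frequently_above (?a w) lam \<or> frequently_above (?b w) lam)" for w
    unfolding qa_lang_eq[OF A lam0] qa_lang_eq[OF B lam0] by auto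
  fix w
  show "eventually (\<lambda>k. w \<in> qa_lang \<Sigma> (C k) lam) sequentially"
    if "w \<in> qa_lang \<Sigma> A lam \<union> qa_lang \<Sigma> B lam"
  proof -
    have w: "w \<in> omega_words \<Sigma>" and freq: "frequently_above (?a w) lam \<or> frequently_above (?b w) lam"
      using that L12 by auto
    have "eventually (\<lambda>K. frequently_above (union_approx lam K (?a w) (?b w)) lam) sequentially"
      using freq by (rule eventually_frequently_above_union_approx_disj[OF lam
          qa_weight_bounds(1)[OF A w] qa_weight_bounds(1)[OF B w]])
    then show ?thesis
      unfolding L using w
        eventually_sequentially_Suc[where P = "\<lambda>K. frequently_above (union_approx lam K (?a w) (?b w)) lam"]
      by simp
  qed
  show "eventually (\<lambda>k. w \<notin> qa_lang \<Sigma> (C k) lam) sequentially"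
    if "w \<notin> qa_lang \<Sigma> A lam \<union> qa_lang \<Sigma> B lam"
  proof -
    have "w \<notin> qa_lang \<Sigma> (C k) lam" for k
    proof
      assume "w \<in> qa_lang \<Sigma> (C k) lam"
      then have w: "w \<in> omega_words \<Sigma>"
        and freq: "frequently_above (union_approx lam (Suc k) (?a w) (?b w)) lam"
        unfolding L by auto
      have "frequently_above (?a w) lam \<or> frequently_above (?b w) lam"
        using freq by (rule frequently_above_union_approx_imp[OF lam qa_weight_bounds(1)[OF A w]
            qa_weight_bounds(1)[OF B w]])
      with w that show False using L12 by blast
    qed
    then show ?thesis by simp
  qed
qed

theorem QBA_class_Un_set_lim:
  assumes lam: "0 < lam" "lam < 1" and L1: "L1 \<in> QBA_class \<Sigma> lam" and L2: "L2 \<in> QBA_class \<Sigma> lam"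
  shows "\<exists>L. (\<forall>k. L k \<in> QBA_class \<Sigma> lam) \<and> set_lim_is L (L1 \<union> L2)"
proof -
  obtain A B where A: "qa_wf \<Sigma> A" "L1 = qa_lang \<Sigma> A lam" and B: "qa_wf \<Sigma> B" "L2 = qa_lang \<Sigma> B lam"
    using QBA_class_obtain_qa L1 L2 by metis
  let ?G = "\<lambda>k w. union_approx lam (Suc k) (qa_weight A w) (qa_weight B w)"
  have "\<forall>k. \<exists>C. qa_wf \<Sigma> C \<and> (\<forall>w \<in> omega_words \<Sigma>. qa_weight C w = ?G k w)"
  proof
    fix k
    obtain C where "qa_wf \<Sigma> C" "\<And>w. w \<in> omega_words \<Sigma> \<Longrightarrow> qa_weight C w = ?G k w"
      by (rule qa_union_approx[OF A(1) B(1) lam, where K = k]) blast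
    then show "\<exists>C. qa_wf \<Sigma> C \<and> (\<forall>w \<in> omega_words \<Sigma>. qa_weight C w = ?G k w)" by blast
  qed
  then obtain C where C: "\<And>k. qa_wf \<Sigma> (C k)" "\<And>k w. w \<in> omega_words \<Sigma> \<Longrightarrow> qa_weight (C k) w = ?G k w"
    by (metis choice)
  show ?thesis
  proof (intro exI[where x = "\<lambda>k. qa_lang \<Sigma> (C k) lam"] conjI allI)
    show "qa_lang \<Sigma> (C k) lam \<in> QBA_class \<Sigma> lam" for k by (rule qa_lang_in_QBA_class[OF C(1)])
    show "set_lim_is (\<lambda>k. qa_lang \<Sigma> (C k) lam) (L1 \<union> L2)"
      unfolding A(2) B(2) by (rule set_lim_is_union_approx[OF lam A(1) B(1) C])
  qed
qed

theorem QBA_class_not_closed_under_set_lim: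
  assumes \<Sigma>: "finite \<Sigma>" and ab: "a \<in> \<Sigma>" "b \<in> \<Sigma>" "a \<noteq> b" and lam: "0 \<le> lam" "lam < 1"
  shows "\<exists>L X. (\<forall>k. L k \<in> QBA_class \<Sigma> lam) \<and> set_lim_is L X \<and> X \<notin> QBA_class \<Sigma> lam"
proof (intro exI conjI allI)
  show "count_mod_lang \<Sigma> a (Suc k) k \<in> QBA_class \<Sigma> lam" for k
    by (rule count_mod_lang_in_QBA_class[OF \<Sigma> _ lam]) simp
  show "set_lim_is (\<lambda>k. count_mod_lang \<Sigma> a (Suc k) k) {w \<in> omega_words \<Sigma>. infinite {j. w j = a}}"
    by (rule set_lim_is_count_mod_lang)
  show "{w \<in> omega_words \<Sigma>. infinite {j. w j = a}} \<notin> QBA_class \<Sigma> lam"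
    by (rule infinitely_many_letter_notin_QBA_class[OF ab lam(1)])
qed

theorem QBA_class_not_closed_under_complement:
  assumes \<Sigma>: "finite \<Sigma>" and ab: "a \<in> \<Sigma>" "b \<in> \<Sigma>" "a \<noteq> b" and lam: "0 \<le> lam" "lam < 1"
  shows "\<exists>L \<in> QBA_class \<Sigma> lam. omega_words \<Sigma> - L \<notin> QBA_class \<Sigma> lam"
proof (rule bexI[where x = "count_mod_lang \<Sigma> b 2 1"])
  show "count_mod_lang \<Sigma> b 2 1 \<in> QBA_class \<Sigma> lam"
    by (rule count_mod_lang_in_QBA_class[OF \<Sigma> _ lam]) simp
  show "omega_words \<Sigma> - count_mod_lang \<Sigma> b 2 1 \<notin> QBA_class \<Sigma> lam"
    by (rule complement_count_mod_lang_notin_QBA_class[OF ab lam(1)])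
qed

theorem QBA_class_not_closed_under_Int:
  assumes \<Sigma>: "finite \<Sigma>" and ab: "a \<in> \<Sigma>" "b \<in> \<Sigma>" "a \<noteq> b" and lam: "0 \<le> lam" "lam < 1"
  shows "\<exists>L1 \<in> QBA_class \<Sigma> lam. \<exists>L2 \<in> QBA_class \<Sigma> lam. L1 \<inter> L2 \<notin> QBA_class \<Sigma> lam"
proof (rule bexI[where x = "count_mod_lang \<Sigma> a 2 0"], rule bexI[where x = "count_mod_lang \<Sigma> a 2 1"])
  show "count_mod_lang \<Sigma> a 2 0 \<in> QBA_class \<Sigma> lam" "count_mod_lang \<Sigma> a 2 1 \<in> QBA_class \<Sigma> lam"
    by (rule count_mod_lang_in_QBA_class[OF \<Sigma> _ lam]; simp)+
  show "count_mod_lang \<Sigma> a 2 0 \<inter> count_mod_lang \<Sigma> a 2 1 \<notin> QBA_class \<Sigma> lam"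
    by (rule count_mod_lang_Int_notin_QBA_class[OF ab lam(1)])
qed

theorem theorem10:
  fixes \<Sigma> :: "'a set"
  assumes "finite \<Sigma>"
  shows
   "(\<forall>L1 \<in> QBA_class \<Sigma> 0. \<forall>L2 \<in> QBA_class \<Sigma> 0. L1 \<union> L2 \<in> QBA_class \<Sigma> 0)
  \<and> (\<forall>lam::real. 0 < lam \<and> lam < 1 \<longrightarrow>
       (\<forall>L1 \<in> QBA_class \<Sigma> lam. \<forall>L2 \<in> QBA_class \<Sigma> lam.
          \<exists>L :: nat \<Rightarrow> (nat \<Rightarrow> 'a) set. (\<forall>k. L k \<in> QBA_class \<Sigma> lam) \<and> set_lim_is L (L1 \<union> L2)))
  \<and> (\<forall>lam::real. 0 < lam \<and> lam < 1 \<longrightarrow>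
       (\<exists>(\<Gamma> :: nat set) (L :: nat \<Rightarrow> (nat \<Rightarrow> nat) set) X. finite \<Gamma> \<and>
          (\<forall>k. L k \<in> QBA_class \<Gamma> lam) \<and> set_lim_is L X \<and> X \<notin> QBA_class \<Gamma> lam))
  \<and> (\<forall>lam::real. 0 \<le> lam \<and> lam < 1 \<longrightarrow>
       (\<exists>(\<Gamma> :: nat set) L. finite \<Gamma> \<and> L \<in> QBA_class \<Gamma> lam \<and>
          omega_words \<Gamma> - L \<notin> QBA_class \<Gamma> lam))
  \<and> (\<forall>lam::real. 0 \<le> lam \<and> lam < 1 \<longrightarrow>
       (\<exists>(\<Gamma> :: nat set) L1 L2. finite \<Gamma> \<and> L1 \<in> QBA_class \<Gamma> lam \<and> L2 \<in> QBA_class \<Gamma> lam \<and>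
          L1 \<inter> L2 \<notin> QBA_class \<Gamma> lam))"
proof (intro conjI allI impI ballI)
  have \<Gamma>: "finite {0, 1 :: nat}" "0 \<in> {0, 1 :: nat}" "1 \<in> {0, 1 :: nat}" "(0 :: nat) \<noteq> 1" by simp_all
  fix lam :: real
  show "\<exists>(\<Gamma> :: nat set) (L :: nat \<Rightarrow> (nat \<Rightarrow> nat) set) X. finite \<Gamma> \<and>
      (\<forall>k. L k \<in> QBA_class \<Gamma> lam) \<and> set_lim_is L X \<and> X \<notin> QBA_class \<Gamma> lam"
    if "0 < lam \<and> lam < 1"
    by (rule exI[where x = "{0, 1}"]) (use QBA_class_not_closed_under_set_lim[OF \<Gamma>, of lam] that in auto)
  show "\<exists>(\<Gamma> :: nat set) L. finite \<Gamma> \<and> L \<in> QBA_class \<Gamma> lam \<and> omega_words \<Gamma> - L \<notin> QBA_class \<Gamma> lam"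
    if "0 \<le> lam \<and> lam < 1"
    by (rule exI[where x = "{0, 1}"]) (use QBA_class_not_closed_under_complement[OF \<Gamma>, of lam] that in auto)
  show "\<exists>(\<Gamma> :: nat set) L1 L2. finite \<Gamma> \<and> L1 \<in> QBA_class \<Gamma> lam \<and> L2 \<in> QBA_class \<Gamma> lam \<and>
      L1 \<inter> L2 \<notin> QBA_class \<Gamma> lam"
    if "0 \<le> lam \<and> lam < 1"
    by (rule exI[where x = "{0, 1}"]) (use QBA_class_not_closed_under_Int[OF \<Gamma>, of lam] that in auto)
  show "\<exists>L. (\<forall>k. L k \<in> QBA_class \<Sigma> lam) \<and> set_lim_is L (L1 \<union> L2)"
    if "0 < lam \<and> lam < 1" "L1 \<in> QBA_class \<Sigma> lam" "L2 \<in> QBA_class \<Sigma> lam" for L1 L2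
    using that by (intro QBA_class_Un_set_lim) auto
qed (rule QBA_class_0_Un)

end
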